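(* Consider problem (P) with $d_i=p$, $A_i=I_p$ and $\mathcal{X}_i=\mathbb{R}^p$ for all $i$, under Assumption 1, with each $f_i$ $\mu_i$-strongly convex and $l_i$-smooth. Let $\mathcal{G}(t)$ be a time-varying digraph that is strongly connected and weight-balanced at every $t\ge0$, whose adjacency matrix is piecewise constant and uniformly bounded, and let $\mathcal{S}$ index the (finitely or infinitely many) possible structures of $\mathcal{G}$, with Laplacians $L_s$ and $\hat L_s=(L_s+L_s^\top)/2$. Let $\mu=\min_i\mu_i$, $l=\max_i l_i$, $\varphi>0$, and let $\alpha\ge\max\{\frac12,\frac{(\varphi^2+3\varphi+3)+l^2+\frac32-\mu}{(\varphi+1)\mu}\}$ and $$\beta\ge\frac{2(\varphi+1)^2\alpha^2+1}{2\varphi\alpha\min_{s\in\mathcal{S}}\eta_2(\hat L_s)}.$$ Then for any initial point $(\mathbf{x}(0),\boldsymbol\lambda(0),\mathbf{z}(0))$ with $\sum_{i=1}^n z_i(0)=0$, the trajectory of IDEA with $\mathbf{L}=\mathbf{L}(t)=L(t)\otimes I_p$ converges exponentially to a point $(\mathbf{x}^*,\boldsymbol\lambda^*,\mathbf{z}^* )$, where $\mathbf{x}^*$ is the unique optimal solution of (P).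
   Context: Problem (P): for $i=1,\dots,n$ let $f_i:\mathbb{R}^{d_i}\to\mathbb{R}$, $\mathcal{X}_i\subseteq\mathbb{R}^{d_i}$, $A_i\in\mathbb{R}^{p\times d_i}$, $b\in\mathbb{R}^p$; $\mathbf{x}=[x_1^\top,\dots,x_n^\top]^\top$, $f(\mathbf{x})=\sum_i f_i(x_i)$, $A=[A_1,\dots,A_n]$, $\mathcal{X}=\prod_i\mathcal{X}_i$; (P) is $\min f(\mathbf{x})$ s.t. $A\mathbf{x}=b$, $\mathbf{x}\in\mathcal{X}$, assumed to have at least one optimal solution. Assumption 1: each $\mathcal{X}_i$ closed and convex, $f_i$ convex on $\mathcal{X}_i$ and differentiable on an open set containing $\mathcal{X}_i$ with $\nabla f_i$ locally Lipschitz there, and Slater's condition holds. $l_i$-smooth means $\nabla f_i$ is $l_i$-Lipschitz. Graph: weighted digraph with adjacency $[a_{ij}]$ ($a_{ij}>0$ if agent $i$ receives from agent $j$, else $0$); Laplacian $L=\mathrm{diag}(\sum_j a_{ij})_i-[a_{ij}]$; weight-balanced: $\sum_j a_{ji}=\sum_j a_{ij}$ for all $i$; strongly connected: directed path between any pair. $\eta_2(\cdot)$ is the second smallest eigenvalue. IDEA: choose $b_1,\dots,b_n$ with $\sum_i b_i=b$; $\mathbf{A}=\mathrm{diag}(A_1,\dots,A_n)$, $\mathbf{b}=[b_1^\top,\dots,b_n^\top]^\top$, $\nabla f(\mathbf{x})=[\nabla f_1(x_1)^\top,\dots,\nabla f_n(x_n)^\top]^\top$. IDEA is $\dot{\mathbf{x}}=-\alpha(\nabla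 f(\mathbf{x})+\mathbf{A}^\top\boldsymbol\lambda)-\mathbf{A}^\top(\mathbf{A}\mathbf{x}-\mathbf{b}-\mathbf{z})$, $\dot{\boldsymbol\lambda}=\mathbf{A}\mathbf{x}-\mathbf{b}-\mathbf{z}-\beta\mathbf{L}\boldsymbol\lambda$, $\dot{\mathbf{z}}=\alpha\beta\mathbf{L}\boldsymbol\lambda$, $\mathbf{z}=[z_1^\top,\dots,z_n^\top]^\top$. *)

theory Defs
  imports "HOL-Analysis.Analysis" "Jordan_Normal_Form.Char_Poly"
    "HOL-Computational_Algebra.Polynomial"
begin

definition strongly_convex :: "real \<Rightarrow> ('a::real_normed_vector \<Rightarrow> real) \<Rightarrow> bool" where
  "strongly_convex \<mu> f \<longleftrightarrow> (\<forall>x y. \<forall>u::real. 0 \<le> u \<and> u \<le> 1 \<longrightarrow>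
      f (u *\<^sub>R x + (1 - u) *\<^sub>R y) \<le> u * f x + (1 - u) * f y - \<mu> / 2 * u * (1 - u) * (norm (x - y))\<^sup>2)"

(* Laplacian entry of an n-agent weighted digraph with adjacency a (a i j > 0: i receives from j) *)
definition lap :: "nat \<Rightarrow> (nat \<Rightarrow> nat \<Rightarrow> real) \<Rightarrow> nat \<Rightarrow> nat \<Rightarrow> real" where
  "lap n a i j = (if i = j then (\<Sum>k<n. a i k) else 0) - a i j"

definition lap_hat :: "nat \<Rightarrow> (nat \<Rightarrow> nat \<Rightarrow> real) \<Rightarrow> real mat" where
  "lap_hat n a = Matrix.mat n n (\<lambda>(i,j). (lap n a i j + lap n a j i) / 2)"

(* second smallest eigenvalue (counted with multiplicity) of a real matrix whose
   characteristic polynomial splits over the reals (e.g. a symmetric matrix) *)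
definition eta2 :: "real mat \<Rightarrow> real" where
  "eta2 M = sorted_list_of_multiset (proots (char_poly M)) ! 1"

definition weight_balanced :: "nat \<Rightarrow> (nat \<Rightarrow> nat \<Rightarrow> real) \<Rightarrow> bool" where
  "weight_balanced n a \<longleftrightarrow> (\<forall>i<n. (\<Sum>j<n. a j i) = (\<Sum>j<n. a i j))"

definition strongly_connected :: "nat \<Rightarrow> (nat \<Rightarrow> nat \<Rightarrow> real) \<Rightarrow> bool" where
  "strongly_connected n a \<longleftrightarrow>
     (\<forall>i<n. \<forall>j<n. (i, j) \<in> {(u, v). u < n \<and> v < n \<and> a v u > 0}\<^sup>*)"

definition locally_const_at :: "(real \<Rightarrow> 'b) \<Rightarrow> real \<Rightarrow> bool" where
  "locally_const_at a t \<longleftrightarrow> (\<exists>e>0. \<forall>s\<ge>0. \<bar>s - t\<bar> < e \<longrightarrow> a s = a t)"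

definition piecewise_constant :: "(real \<Rightarrow> 'b) \<Rightarrow> bool" where
  "piecewise_constant a \<longleftrightarrow> (\<forall>T. finite {t \<in> {0..T}. \<not> locally_const_at a t})"

(* (P) with A_i = I, X_i = R^p:  min sum f_i(x_i)  s.t.  sum x_i = b *)
definition feasible :: "nat \<Rightarrow> 'a::real_vector \<Rightarrow> (nat \<Rightarrow> 'a) \<Rightarrow> bool" where
  "feasible n b x \<longleftrightarrow> (\<Sum>i<n. x i) = b"

definition optimal :: "nat \<Rightarrow> (nat \<Rightarrow> 'a::real_vector \<Rightarrow> real) \<Rightarrow> 'a \<Rightarrow> (nat \<Rightarrow> 'a) \<Rightarrow> bool" where
  "optimal n f b x \<longleftrightarrow> feasible n b x \<and>
     (\<forall>y. feasible n b y \<longrightarrow> (\<Sum>i<n. f i (x i)) \<le> (\<Sum>i<n. f i (y i)))"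

(* (x, lambda, z) is a trajectory of IDEA (A_i = I_p) on [0,oo) with time-varying graph a(t):
   continuous, and the ODE holds at every t > 0 that is not a switching instant of a *)
definition IDEA_trajectory ::
  "nat \<Rightarrow> (nat \<Rightarrow> 'a::euclidean_space \<Rightarrow> 'a) \<Rightarrow> (nat \<Rightarrow> 'a) \<Rightarrow> real \<Rightarrow> real \<Rightarrow>
   (real \<Rightarrow> nat \<Rightarrow> nat \<Rightarrow> real) \<Rightarrow>
   (real \<Rightarrow> nat \<Rightarrow> 'a) \<Rightarrow> (real \<Rightarrow> nat \<Rightarrow> 'a) \<Rightarrow> (real \<Rightarrow> nat \<Rightarrow> 'a) \<Rightarrow> bool" where
  "IDEA_trajectory n gf bb \<alpha> \<beta> a x lam z \<longleftrightarrow>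
     (\<forall>i<n. continuous_on {0..} (\<lambda>t. x t i) \<and> continuous_on {0..} (\<lambda>t. lam t i)
            \<and> continuous_on {0..} (\<lambda>t. z t i)) \<and>
     (\<forall>t>0. locally_const_at a t \<longrightarrow> (\<forall>i<n.
        ((\<lambda>s. x s i) has_vector_derivative
            (- \<alpha> *\<^sub>R (gf i (x t i) + lam t i) - (x t i - bb i - z t i))) (at t) \<and>
        ((\<lambda>s. lam s i) has_vector_derivative
            (x t i - bb i - z t i - \<beta> *\<^sub>R (\<Sum>j<n. lap n (a t) i j *\<^sub>R lam t j))) (at t) \<and>
        ((\<lambda>s. z s i) has_vector_derivative
            ((\<alpha> * \<beta>) *\<^sub>R (\<Sum>j<n. lap n (a t) i j *\<^sub>R lam t j))) (at t)))"

end

theory Submission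
  imports Defs
begin

(*
  Work in error coordinates around the equilibrium (xo, ls, xo - bb): xo is the optimum and
  ls = - grad f_i (xo_i) is the same for all agents by optimality.  The sum of the z_i is
  invariant, because the Laplacian of a weight-balanced graph has zero column sums.  With
  W = Z + alpha L, whose derivative alpha (X - Z) is free of the Laplacian, a quadratic form V in
  X, W and L with a small cross term between the sums of X and W satisfies V' <= - kappa V at every
  time that is not a switching instant: strong monotonicity of the gradients controls X, and the
  disagreement of L is controlled by the algebraic connectivity eta2 of the symmetrised
  Laplacian, bounded below uniformly over all graph structures.  Hence V, and with it every
  error, decays exponentially.
*)

section \<open>The Laplacian quadratic form\<close>

definition lap_quad :: "nat \<Rightarrow> (nat \<Rightarrow> nat \<Rightarrow> real) \<Rightarrow> (nat \<Rightarrow> real) \<Rightarrow> real" where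
  "lap_quad n a v = (\<Sum>i<n. \<Sum>j<n. lap n a i j * v i * v j)"

definition lap_sym :: "nat \<Rightarrow> (nat \<Rightarrow> nat \<Rightarrow> real) \<Rightarrow> nat \<Rightarrow> nat \<Rightarrow> real" where
  "lap_sym n a i j = (lap n a i j + lap n a j i) / 2"

lemma lap_row_sum: "i < n \<Longrightarrow> (\<Sum>j<n. lap n a i j) = 0"
  by (simp add: lap_def sum_subtractf)

lemma lap_col_sum: "weight_balanced n a \<Longrightarrow> j < n \<Longrightarrow> (\<Sum>i<n. lap n a i j) = 0"
  by (simp add: lap_def sum_subtractf weight_balanced_def)

lemma lap_sym_commute: "lap_sym n a i j = lap_sym n a j i"
  by (simp add: lap_sym_def add.commute)

lemma lap_sym_row_sum:
  "weight_balanced n a \<Longrightarrow> i < n \<Longrightarrow> (\<Sum>j<n. lap_sym n a i j) = 0"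
  by (simp add: lap_sym_def lap_row_sum lap_col_sum sum.distrib flip: sum_divide_distrib)

lemma lap_sym_col_sum:
  "weight_balanced n a \<Longrightarrow> j < n \<Longrightarrow> (\<Sum>i<n. lap_sym n a i j) = 0"
  by (subst lap_sym_commute) (rule lap_sym_row_sum)

lemma lap_quad_edge_sum:
  assumes "weight_balanced n a"
  shows "lap_quad n a v = (\<Sum>i<n. \<Sum>j<n. a i j * (v i - v j)^2) / 2"
proof -
  have out_in: "(\<Sum>i<n. \<Sum>j<n. a i j * (v j)^2) = (\<Sum>i<n. \<Sum>j<n. a i j * (v i)^2)"
  proof -
    have "(\<Sum>i<n. \<Sum>j<n. a i j * (v j)^2) = (\<Sum>j<n. (\<Sum>i<n. a i j) * (v j)^2)"
      by (subst sum.swap) (simp add: sum_distrib_right)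
    also have "\<dots> = (\<Sum>j<n. (\<Sum>i<n. a j i) * (v j)^2)"
      using assms by (simp add: weight_balanced_def)
    finally show ?thesis by (simp add: sum_distrib_right)
  qed
  have "lap_quad n a v = (\<Sum>i<n. (\<Sum>j<n. a i j) * (v i)^2) - (\<Sum>i<n. \<Sum>j<n. a i j * v i * v j)"
    by (simp add: lap_quad_def lap_def left_diff_distrib sum_subtractf power2_eq_square
        if_distrib[of "\<lambda>x. x * _"] mult.assoc cong: if_cong)
  then have "lap_quad n a v = (\<Sum>i<n. \<Sum>j<n. a i j * (v i)^2) - (\<Sum>i<n. \<Sum>j<n. a i j * v i * v j)"
    by (simp add: sum_distrib_right)
  moreover have "(\<Sum>i<n. \<Sum>j<n. a i j * (v i - v j)^2) = (\<Sum>i<n. \<Sum>j<n. a i j * (v i)^2)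
      - 2 * (\<Sum>i<n. \<Sum>j<n. a i j * v i * v j) + (\<Sum>i<n. \<Sum>j<n. a i j * (v j)^2)"
    by (simp add: power2_diff algebra_simps sum.distrib sum_subtractf sum_distrib_left)
  ultimately show ?thesis using out_in by simp
qed

lemma lap_quad_nonneg:
  assumes "weight_balanced n a" and "\<And>i j. i < n \<Longrightarrow> j < n \<Longrightarrow> a i j \<ge> 0"
  shows "lap_quad n a v \<ge> 0"
  unfolding lap_quad_edge_sum[OF assms(1)] using assms(2)
  by (intro divide_nonneg_pos sum_nonneg mult_nonneg_nonneg) auto

lemma lap_quad_eq_0_imp_consensus:
  assumes wb: "weight_balanced n a" and nn: "\<And>i j. i < n \<Longrightarrow> j < n \<Longrightarrow> a i j \<ge> 0"
    and sc: "strongly_connected n a" and q0: "lap_quad n a v = 0" and "i < n" "j < n"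
  shows "v i = v j"
proof -
  have terms_nonneg: "\<And>i j. i < n \<Longrightarrow> j < n \<Longrightarrow> 0 \<le> a i j * (v i - v j)^2"
    using nn by simp
  have rows_nonneg: "\<forall>i\<in>{..<n}. 0 \<le> (\<Sum>j<n. a i j * (v i - v j)^2)"
    using terms_nonneg by (auto intro: sum_nonneg)
  have "(\<Sum>i<n. \<Sum>j<n. a i j * (v i - v j)^2) = 0"
    using q0 by (simp add: lap_quad_edge_sum[OF wb])
  then have "(\<Sum>j<n. a i j * (v i - v j)^2) = 0" if "i < n" for i
    using that rows_nonneg sum_nonneg_eq_0_iff[of "{..<n}" "\<lambda>i. \<Sum>j<n. a i j * (v i - v j)^2"]
    by simp
  then have "a i j * (v i - v j)^2 = 0" if "i < n" "j < n" for i j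
    using that terms_nonneg sum_nonneg_eq_0_iff[of "{..<n}" "\<lambda>j. a i j * (v i - v j)^2"]
    by simp
  then have edge: "v y = v x" if "x < n" "y < n" "a y x > 0" for x y
    using that by fastforce
  have "(i, j) \<in> {(u, w). u < n \<and> w < n \<and> a w u > 0}\<^sup>*"
    using sc \<open>i < n\<close> \<open>j < n\<close> by (simp add: strongly_connected_def)
  then have "v j = v i"
    by (induction rule: rtrancl_induct) (auto dest: edge)
  then show ?thesis by simp
qed

lemma lap_quad_lap_sym: "lap_quad n a v = (\<Sum>i<n. v i * (\<Sum>j<n. lap_sym n a i j * v j))"
proof -
  have "(\<Sum>i<n. \<Sum>j<n. lap n a j i * v i * v j) = lap_quad n a v"
    unfolding lap_quad_def by (subst sum.swap) (simp add: algebra_simps)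
  then show ?thesis
    by (simp add: lap_sym_def lap_quad_def sum_distrib_left sum.distrib algebra_simps
        add_divide_distrib flip: sum_divide_distrib)
qed

lemma lap_quad_add_scaled:
  "lap_quad n a (\<lambda>i. v i + t * u i) =
     lap_quad n a v + 2 * t * (\<Sum>i<n. u i * (\<Sum>j<n. lap_sym n a i j * v j)) + t^2 * lap_quad n a u"
proof -
  have "(\<Sum>i<n. \<Sum>j<n. lap n a i j * v i * u j) = (\<Sum>i<n. \<Sum>j<n. lap n a j i * u i * v j)"
    by (subst sum.swap) (simp add: algebra_simps)
  then have "2 * (\<Sum>i<n. u i * (\<Sum>j<n. lap_sym n a i j * v j)) =
      (\<Sum>i<n. \<Sum>j<n. lap n a i j * u i * v j) + (\<Sum>i<n. \<Sum>j<n. lap n a i j * v i * u j)"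
    by (simp add: lap_sym_def sum_distrib_left sum.distrib algebra_simps flip: sum_divide_distrib)
  moreover have "lap_quad n a (\<lambda>i. v i + t * u i) = lap_quad n a v
      + t * ((\<Sum>i<n. \<Sum>j<n. lap n a i j * u i * v j) + (\<Sum>i<n. \<Sum>j<n. lap n a i j * v i * u j))
      + t^2 * lap_quad n a u"
    by (simp add: lap_quad_def algebra_simps sum.distrib sum_distrib_left power2_eq_square)
  ultimately show ?thesis by (simp add: algebra_simps)
qed

lemma lap_quad_scale: "lap_quad n a (\<lambda>i. t * v i) = t^2 * lap_quad n a v"
  by (simp add: lap_quad_def sum_distrib_left algebra_simps power2_eq_square)

section \<open>Algebraic connectivity\<close>

lemma compact_unit_zero_sum_vectors:
  "compact {v :: nat \<Rightarrow> real. (\<forall>i\<ge>n. v i = 0) \<and> (\<Sum>i<n. v i) = 0 \<and> (\<Sum>i<n. (v i)^2) = 1}"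
proof -
  let ?box = "PiE UNIV (\<lambda>i. if i < n then {-1..1::real} else {0})"
  have "compact ?box"
    using compactin_PiE[of "\<lambda>_. euclidean" UNIV "\<lambda>i. if i < n then {-1..1::real} else {0}"]
    by (simp add: euclidean_product_topology)
  moreover have "closed {v :: nat \<Rightarrow> real. (\<Sum>i<n. v i) = 0 \<and> (\<Sum>i<n. (v i)^2) = 1}"
    by (intro closed_Collect_conj closed_Collect_eq continuous_intros) auto
  moreover have "\<bar>v i\<bar> \<le> 1" if "(\<Sum>i<n. (v i)^2) = 1" "i < n" for v :: "nat \<Rightarrow> real" and i
  proof -
    have "(v i)^2 \<le> (\<Sum>i<n. (v i)^2)"
      using that(2) by (intro member_le_sum) auto
    then show ?thesis using that(1) by (simp add: abs_square_le_1)
  qed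
  then have "{v. (\<forall>i\<ge>n. v i = 0) \<and> (\<Sum>i<n. v i) = 0 \<and> (\<Sum>i<n. (v i)^2) = 1}
      = ?box \<inter> {v. (\<Sum>i<n. v i) = 0 \<and> (\<Sum>i<n. (v i)^2) = 1}"
    by (fastforce simp: PiE_def Pi_def extensional_def abs_le_iff not_le split: if_splits)
  ultimately show ?thesis by (simp add: compact_Int_closed)
qed

lemma lap_quad_rayleigh_min:
  assumes "n \<ge> 2"
  obtains v0 where "(\<Sum>i<n. v0 i) = 0" and "(\<Sum>i<n. (v0 i)^2) = 1"
    and "\<And>v. (\<Sum>i<n. v i) = 0 \<Longrightarrow> lap_quad n a v0 * (\<Sum>i<n. (v i)^2) \<le> lap_quad n a v"
proof -
  \<comment> \<open>restricting the support to \<open>{..<n}\<close> makes \<open>S\<close> compact in the product topology\<close>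
  define S where "S = {v :: nat \<Rightarrow> real. (\<forall>i\<ge>n. v i = 0) \<and> (\<Sum>i<n. v i) = 0 \<and> (\<Sum>i<n. (v i)^2) = 1}"
  define w :: "nat \<Rightarrow> real" where "w i = (if i = 0 then 1 else if i = 1 then -1 else 0) / sqrt 2" for i
  have "{0, 1} \<subseteq> {..<n}" using assms by auto
  then have sums: "(\<Sum>i<n. g (w i)) = g (w 0) + g (w 1)" if "g 0 = 0" for g :: "real \<Rightarrow> real"
    using that by (subst sum.mono_neutral_right[of "{..<n}" "{0, 1}"]) (auto simp: w_def)
  have "(\<Sum>i<n. w i) = 0" using sums[of "\<lambda>x. x"] by (simp add: w_def)
  moreover have "(\<Sum>i<n. (w i)^2) = 1" using sums[of "\<lambda>x. x^2"] by (simp add: w_def power_divide)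
  moreover have "\<forall>i\<ge>n. w i = 0" using assms by (simp add: w_def)
  ultimately have "w \<in> S" by (simp add: S_def)
  moreover have "continuous_on S (lap_quad n a)"
    unfolding lap_quad_def
    by (intro continuous_intros) (auto intro: continuous_on_subset[OF continuous_on_product_coordinates])
  ultimately obtain v0 where v0: "v0 \<in> S" and min: "\<And>u. u \<in> S \<Longrightarrow> lap_quad n a v0 \<le> lap_quad n a u"
    using continuous_attains_inf[of S "lap_quad n a"] compact_unit_zero_sum_vectors
    unfolding S_def by blast
  have "lap_quad n a v0 * (\<Sum>i<n. (v i)^2) \<le> lap_quad n a v" if "(\<Sum>i<n. v i) = 0" for v
  proof (cases "(\<Sum>i<n. (v i)^2) = 0")
    case True
    then have "\<forall>i<n. v i = 0" by (simp add: sum_nonneg_eq_0_iff)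
    then show ?thesis by (simp add: True lap_quad_def)
  next
    case False
    define q where "q = (\<Sum>i<n. (v i)^2)"
    have q: "q > 0" using False unfolding q_def by (simp add: sum_nonneg order_less_le)
    define u where "u i = (if i < n then v i / sqrt q else 0)" for i
    have "u \<in> S"
      using that q by (simp add: S_def u_def power_divide q_def flip: sum_divide_distrib)
    then have "lap_quad n a v0 \<le> lap_quad n a u" by (rule min)
    also have "lap_quad n a u = lap_quad n a (\<lambda>i. (1 / sqrt q) * v i)"
      by (simp add: lap_quad_def u_def)
    also have "\<dots> = lap_quad n a v / q"
      using q by (simp only: lap_quad_scale) (simp add: power_divide)
    finally show ?thesis using q by (simp add: q_def field_simps)
  qed
  with v0 that show thesis by (simp add: S_def) blast
qed

lemma lap_quad_pos:
  assumes wb: "weight_balanced n a" and nn: "\<And>i j. i < n \<Longrightarrow> j < n \<Longrightarrow> a i j \<ge> 0"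
    and sc: "strongly_connected n a"
    and v: "(\<Sum>i<n. v i) = 0" "i < n" "v i \<noteq> 0"
  shows "lap_quad n a v > 0"
proof (rule ccontr)
  assume "\<not> lap_quad n a v > 0"
  then have "lap_quad n a v = 0" using lap_quad_nonneg[OF wb nn] by (simp add: order_less_le)
  then have "v j = v i" if "j < n" for j
    using lap_quad_eq_0_imp_consensus[OF wb nn sc] that v(2) by blast
  then have "(\<Sum>j<n. v j) = n * v i" by simp
  then show False using v by simp
qed

lemma quadratic_nonneg_imp_linear_coeff_0:
  fixes B C :: real
  assumes "\<And>t. 0 \<le> 2 * t * B + t^2 * C"
  shows "B = 0"
proof (rule ccontr)
  assume "B \<noteq> 0"
  define K where "K = \<bar>C\<bar> + 1"
  have K: "K > 0" "C \<le> K" unfolding K_def by auto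
  define t where "t = - B / K"
  have "t^2 * C \<le> t^2 * K" using K by (intro mult_left_mono) auto
  also have "\<dots> = B^2 / K" using K by (simp add: t_def power2_eq_square)
  finally have "2 * t * B + t^2 * C \<le> 2 * t * B + B^2 / K" by simp
  also have "\<dots> = - (B^2 / K)" using K by (simp add: t_def power2_eq_square)
  also have "\<dots> < 0" using K \<open>B \<noteq> 0\<close> by simp
  finally show False using assms[of t] by simp
qed

lemma rayleigh_minimizer_eigenvector:
  assumes wb: "weight_balanced n a"
    and min: "\<And>v. (\<Sum>i<n. v i) = 0 \<Longrightarrow> c * (\<Sum>i<n. (v i)^2) \<le> lap_quad n a v"
    and v0: "(\<Sum>i<n. v0 i) = 0" "lap_quad n a v0 = c * (\<Sum>i<n. (v0 i)^2)"
    and "i < n"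
  shows "(\<Sum>j<n. lap_sym n a i j * v0 j) = c * v0 i"
proof -
  \<comment> \<open>the residual \<open>r\<close> is orthogonal to every zero-sum vector, and has zero sum itself\<close>
  define r where "r i = (\<Sum>j<n. lap_sym n a i j * v0 j) - c * v0 i" for i
  have orth: "(\<Sum>i<n. u i * r i) = 0" if u: "(\<Sum>i<n. u i) = 0" for u
  proof -
    define B where "B = (\<Sum>i<n. u i * (\<Sum>j<n. lap_sym n a i j * v0 j))"
    have "0 \<le> 2 * t * (B - c * (\<Sum>i<n. u i * v0 i)) + t^2 * (lap_quad n a u - c * (\<Sum>i<n. (u i)^2))"
      for t
    proof -
      have "(\<Sum>i<n. v0 i + t * u i) = 0" using u v0 by (simp add: sum.distrib flip: sum_distrib_left)
      from min[OF this] have "c * (\<Sum>i<n. (v0 i + t * u i)^2) \<le>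
          lap_quad n a v0 + 2 * t * B + t^2 * lap_quad n a u"
        by (simp only: lap_quad_add_scaled B_def)
      moreover have "(\<Sum>i<n. (v0 i + t * u i)^2) =
          (\<Sum>i<n. (v0 i)^2) + 2 * t * (\<Sum>i<n. u i * v0 i) + t^2 * (\<Sum>i<n. (u i)^2)"
        by (simp add: power2_sum sum.distrib sum_distrib_left algebra_simps)
      ultimately show ?thesis using v0(2) by (simp add: algebra_simps)
    qed
    from quadratic_nonneg_imp_linear_coeff_0[OF this] have "B = c * (\<Sum>i<n. u i * v0 i)" by simp
    then show ?thesis by (simp add: r_def B_def algebra_simps sum_subtractf sum_distrib_left)
  qed
  have "(\<Sum>i<n. \<Sum>j<n. lap_sym n a i j * v0 j) = (\<Sum>j<n. (\<Sum>i<n. lap_sym n a i j) * v0 j)"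
    by (subst sum.swap) (simp add: sum_distrib_right)
  then have "(\<Sum>i<n. r i) = 0"
    using v0 by (simp add: r_def lap_sym_col_sum[OF wb] sum_subtractf flip: sum_distrib_left)
  from orth[OF this] have "(\<Sum>i<n. (r i)^2) = 0" by (simp add: power2_eq_square)
  with \<open>i < n\<close> have "r i = 0" by (simp add: sum_nonneg_eq_0_iff)
  then show ?thesis by (simp add: r_def)
qed

lemma lap_sym_spectral_gap:
  assumes n: "n \<ge> 2" and wb: "weight_balanced n a"
    and nn: "\<And>i j. i < n \<Longrightarrow> j < n \<Longrightarrow> a i j \<ge> 0" and sc: "strongly_connected n a"
  obtains c i0 v0 where "c > 0" and "i0 < n" "v0 i0 \<noteq> 0"
    and "\<And>i. i < n \<Longrightarrow> (\<Sum>j<n. lap_sym n a i j * v0 j) = c * v0 i"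
    and "\<And>v. (\<Sum>i<n. v i) = 0 \<Longrightarrow> c * (\<Sum>i<n. (v i)^2) \<le> lap_quad n a v"
proof -
  obtain v0 where v0: "(\<Sum>i<n. v0 i) = 0" "(\<Sum>i<n. (v0 i)^2) = 1"
    and min: "\<And>v. (\<Sum>i<n. v i) = 0 \<Longrightarrow> lap_quad n a v0 * (\<Sum>i<n. (v i)^2) \<le> lap_quad n a v"
    using lap_quad_rayleigh_min[OF n] by blast
  obtain i0 where i0: "i0 < n" "v0 i0 \<noteq> 0"
    using v0(2) by (metis (no_types, lifting) lessThan_iff sum.neutral zero_neq_one zero_power2)
  have "lap_quad n a v0 > 0"
    by (rule lap_quad_pos[where v = v0 and i = i0]) (use wb nn sc v0 i0 in auto)
  moreover have "(\<Sum>j<n. lap_sym n a i j * v0 j) = lap_quad n a v0 * v0 i" if "i < n" for i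
    using rayleigh_minimizer_eigenvector[OF wb min v0(1) _ that] v0(2) by simp
  ultimately show thesis using that i0 min by blast
qed

lemma lap_hat_carrier: "lap_hat n a \<in> carrier_mat n n"
  by (simp add: lap_hat_def)

lemma dim_lap_hat [simp]: "dim_row (lap_hat n a) = n" "dim_col (lap_hat n a) = n"
  by (simp_all add: lap_hat_def)

lemma lap_hat_mult_vec:
  assumes "i < n"
  shows "(lap_hat n a *\<^sub>v vec n v) $ i = (\<Sum>j<n. lap_sym n a i j * v j)"
proof -
  have "(lap_hat n a *\<^sub>v vec n v) $ i = row (lap_hat n a) i \<bullet> vec n v"
    using assms by simp
  also have "\<dots> = (\<Sum>j\<in>{0..<n}. lap_hat n a $$ (i, j) * v j)"
    using assms by (simp add: scalar_prod_def)
  also have "\<dots> = (\<Sum>j<n. lap_sym n a i j * v j)"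
    using assms by (simp add: lap_hat_def lap_sym_def lessThan_atLeast0)
  finally show ?thesis .
qed

lemma char_poly_lap_hat_root:
  assumes eig: "\<And>i. i < n \<Longrightarrow> (\<Sum>j<n. lap_sym n a i j * v j) = c * v i"
    and "k < n" "v k \<noteq> 0"
  shows "poly (char_poly (lap_hat n a)) c = 0"
proof -
  have "vec n v $ k \<noteq> 0\<^sub>v n $ k"
    using assms(2,3) by simp
  then have "vec n v \<noteq> 0\<^sub>v n" by metis
  then have "eigenvector (lap_hat n a) (vec n v) c"
    by (auto simp: eigenvector_def lap_hat_carrier lap_hat_mult_vec eig simp del: index_mult_mat_vec
        intro!: eq_vecI)
  then show ?thesis
    using eigenvalue_root_char_poly[OF lap_hat_carrier] by (auto simp: eigenvalue_def)
qed

lemma char_poly_lap_hat_root_nonneg: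
  assumes wb: "weight_balanced n a" and nn: "\<And>i j. i < n \<Longrightarrow> j < n \<Longrightarrow> a i j \<ge> 0"
    and root: "poly (char_poly (lap_hat n a)) x = 0"
  shows "0 \<le> x"
proof -
  have "eigenvalue (lap_hat n a) x"
    using root eigenvalue_root_char_poly[OF lap_hat_carrier] by simp
  then obtain w where "eigenvector (lap_hat n a) w x" by (auto simp: eigenvalue_def)
  then have w: "w \<in> carrier_vec n" "w \<noteq> 0\<^sub>v n" "lap_hat n a *\<^sub>v w = x \<cdot>\<^sub>v w"
    by (auto simp: eigenvector_def lap_hat_carrier)
  define v where "v i = w $ i" for i
  have w_eq: "w = vec n v" using w(1) by (auto simp: v_def intro!: eq_vecI)
  have eig: "(\<Sum>j<n. lap_sym n a i j * v j) = x * v i" if "i < n" for i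
    using arg_cong[OF w(3), of "\<lambda>u. u $ i"] that
    by (simp add: w_eq lap_hat_mult_vec del: index_mult_mat_vec)
  have "lap_quad n a v = (\<Sum>i<n. v i * (x * v i))"
    unfolding lap_quad_lap_sym by (rule sum.cong) (simp_all add: eig)
  also have "\<dots> = x * (\<Sum>i<n. (v i)^2)"
    by (simp add: sum_distrib_left power2_eq_square algebra_simps)
  finally have quad: "lap_quad n a v = x * (\<Sum>i<n. (v i)^2)" .
  have "\<exists>i0<n. v i0 \<noteq> 0"
  proof (rule ccontr)
    assume "\<not> (\<exists>i0<n. v i0 \<noteq> 0)"
    then have "w = 0\<^sub>v n" by (auto simp: w_eq intro!: eq_vecI)
    with w(2) show False by simp
  qed
  then obtain i0 where "i0 < n" "v i0 \<noteq> 0" by blast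
  then have "(\<Sum>i<n. (v i)^2) > 0"
    by (intro sum_pos2[of _ i0]) auto
  with quad show ?thesis
    using lap_quad_nonneg[OF wb nn, of v] by (simp add: zero_le_mult_iff)
qed

lemma sorted_list_of_multiset_nth_1_le:
  fixes M :: "real multiset"
  assumes "0 \<in># M" "c \<in># M" "0 < c" "\<forall>x\<in>#M. 0 \<le> x"
  shows "0 \<le> sorted_list_of_multiset M ! 1" and "sorted_list_of_multiset M ! 1 \<le> c"
proof -
  define s where "s = sorted_list_of_multiset M"
  have s: "sorted s" "set s = set_mset M" by (simp_all add: s_def)
  have "0 \<in> set s" "c \<in> set s" using assms(1,2) s(2) by simp_all
  then obtain k0 kc where k0: "k0 < length s" "s ! k0 = 0" and kc: "kc < length s" "s ! kc = c"
    by (auto simp: in_set_conv_nth)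
  note k = k0 kc
  then have "k0 \<noteq> kc" using assms(3) by auto
  then have len: "1 < length s" using k by linarith
  then show "0 \<le> sorted_list_of_multiset M ! 1"
    using assms(4) s(2) nth_mem unfolding s_def[symmetric] by blast
  have "s ! 1 \<le> s ! max k0 kc"
    using s(1) len \<open>k0 \<noteq> kc\<close> k by (intro sorted_nth_mono) auto
  also have "\<dots> \<le> c" using k assms(3) by (simp add: max_def)
  finally show "sorted_list_of_multiset M ! 1 \<le> c" by (simp add: s_def)
qed

text \<open>The spectral bound on the algebraic connectivity: 0 (eigenvector the all-ones vector)
  and the minimum \<open>c\<close> of the Rayleigh quotient on its orthogonal complement are two distinct
  eigenvalues among nonnegative ones, hence the second smallest is at most \<open>c\<close>.\<close>

lemma eta2_lap_hat:
  assumes n: "n \<ge> 2" and wb: "weight_balanced n a"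
    and nn: "\<And>i j. i < n \<Longrightarrow> j < n \<Longrightarrow> a i j \<ge> 0" and sc: "strongly_connected n a"
  shows "0 \<le> eta2 (lap_hat n a)"
    and "(\<Sum>i<n. v i) = 0 \<Longrightarrow> eta2 (lap_hat n a) * (\<Sum>i<n. (v i)^2) \<le> lap_quad n a v"
proof -
  obtain c i0 v0 where c: "c > 0" and i0: "i0 < n" "v0 i0 \<noteq> 0"
    and eig: "\<And>i. i < n \<Longrightarrow> (\<Sum>j<n. lap_sym n a i j * v0 j) = c * v0 i"
    and min: "\<And>v. (\<Sum>i<n. v i) = 0 \<Longrightarrow> c * (\<Sum>i<n. (v i)^2) \<le> lap_quad n a v"
    using lap_sym_spectral_gap[OF n wb nn sc] by blast
  let ?p = "char_poly (lap_hat n a)"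
  have "degree ?p = n"
    using degree_monic_char_poly[OF lap_hat_carrier] by blast
  then have "?p \<noteq> 0" using n by auto
  then have roots: "x \<in># proots ?p \<longleftrightarrow> poly ?p x = 0" for x by simp
  have "poly ?p 0 = 0"
    using n lap_sym_row_sum[OF wb]
    by (intro char_poly_lap_hat_root[where v = "\<lambda>_. 1" and k = 0]) auto
  moreover have "poly ?p c = 0" by (rule char_poly_lap_hat_root[OF eig i0])
  moreover have "\<forall>x\<in>#proots ?p. 0 \<le> x"
    using char_poly_lap_hat_root_nonneg[OF wb nn] by (simp add: roots)
  ultimately have "0 \<le> sorted_list_of_multiset (proots ?p) ! 1"
    and "sorted_list_of_multiset (proots ?p) ! 1 \<le> c"
    using sorted_list_of_multiset_nth_1_le[of "proots ?p" c] c by (simp_all add: roots)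
  then have "0 \<le> eta2 (lap_hat n a)" "eta2 (lap_hat n a) \<le> c"
    by (simp_all add: eta2_def)
  then show "0 \<le> eta2 (lap_hat n a)" by simp
  assume "(\<Sum>i<n. v i) = 0"
  have "eta2 (lap_hat n a) * (\<Sum>i<n. (v i)^2) \<le> c * (\<Sum>i<n. (v i)^2)"
    using \<open>eta2 (lap_hat n a) \<le> c\<close> by (intro mult_right_mono) (auto intro: sum_nonneg)
  also have "\<dots> \<le> lap_quad n a v" by (rule min) fact
  finally show "eta2 (lap_hat n a) * (\<Sum>i<n. (v i)^2) \<le> lap_quad n a v" .
qed

section \<open>Strong convexity and optimality\<close>

lemma GDERIV_along_line:
  fixes f :: "'a::real_inner \<Rightarrow> real"
  assumes "GDERIV f p :> g"
  shows "((\<lambda>t. f (p + t *\<^sub>R q)) has_real_derivative inner q g) (at 0)"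
proof -
  have "((\<lambda>t. p + t *\<^sub>R q) has_derivative (\<lambda>h. h *\<^sub>R q)) (at 0)"
    by (auto intro!: derivative_eq_intros)
  moreover have "(f has_derivative (\<lambda>h. inner h g)) (at (p + 0 *\<^sub>R q))"
    using assms by (simp add: gderiv_def)
  ultimately have "((\<lambda>t. f (p + t *\<^sub>R q)) has_derivative (\<lambda>h. inner (h *\<^sub>R q) g)) (at 0)"
    by (rule has_derivative_compose[of "\<lambda>t. p + t *\<^sub>R q"])
  moreover have "(\<lambda>h. inner (h *\<^sub>R q) g) = (*) (inner q g)" by (auto simp: fun_eq_iff)
  ultimately show ?thesis by (simp add: has_field_derivative_def)
qed

lemma strongly_convex_mono: "strongly_convex \<mu> f \<Longrightarrow> \<mu>' \<le> \<mu> \<Longrightarrow> strongly_convex \<mu>' f"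
  unfolding strongly_convex_def
  by (smt (verit, best) mult_right_mono mult_nonneg_nonneg zero_le_power2 divide_right_mono)

lemma strongly_convex_first_order:
  fixes f :: "'a::real_inner \<Rightarrow> real"
  assumes sc: "strongly_convex \<mu> f" and gd: "GDERIV f x :> g"
  shows "f y \<ge> f x + inner (y - x) g + \<mu> / 2 * (norm (y - x))^2"
proof -
  define d where "d = y - x"
  define F where "F u = f (x + u *\<^sub>R d)" for u
  have "(F has_real_derivative inner d g) (at 0)"
    unfolding F_def by (rule GDERIV_along_line[OF gd])
  then have "((\<lambda>u. (F u - F 0) / u) \<longlongrightarrow> inner d g) (at_right 0)"
    by (auto simp: has_field_derivative_iff intro: tendsto_mono[OF at_le])
  moreover have "((\<lambda>u. f y - f x - \<mu> / 2 * (1 - u) * (norm d)^2)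
      \<longlongrightarrow> f y - f x - \<mu> / 2 * (1 - 0) * (norm d)^2) (at_right 0)"
    by (intro tendsto_intros)
  moreover have "\<forall>\<^sub>F u in at_right 0. (F u - F 0) / u \<le> f y - f x - \<mu> / 2 * (1 - u) * (norm d)^2"
  proof (rule eventually_at_rightI[of 0 1])
    fix u :: real assume u: "u \<in> {0<..<1}"
    have "x + u *\<^sub>R d = u *\<^sub>R y + (1 - u) *\<^sub>R x" by (simp add: d_def algebra_simps)
    then have "F u \<le> u * f y + (1 - u) * f x - \<mu> / 2 * u * (1 - u) * (norm d)^2"
      using sc u by (simp add: strongly_convex_def F_def d_def)
    then have "F u - F 0 \<le> u * (f y - f x - \<mu> / 2 * (1 - u) * (norm d)^2)"
      by (simp add: F_def algebra_simps)
    then show "(F u - F 0) / u \<le> f y - f x - \<mu> / 2 * (1 - u) * (norm d)^2"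
      using u by (simp add: divide_le_eq mult.commute)
  qed simp
  ultimately have "inner d g \<le> f y - f x - \<mu> / 2 * (1 - 0) * (norm d)^2"
    by (intro tendsto_le[of "at_right 0"]) auto
  then show ?thesis by (simp add: d_def)
qed

lemma strongly_convex_gradient_monotone:
  fixes f :: "'a::real_inner \<Rightarrow> real"
  assumes sc: "strongly_convex \<mu> f" and "GDERIV f x :> gx" and "GDERIV f y :> gy"
  shows "inner (x - y) (gx - gy) \<ge> \<mu> * (norm (x - y))^2"
  using strongly_convex_first_order[OF sc assms(2), of y] strongly_convex_first_order[OF sc assms(3), of x]
  by (simp add: norm_minus_commute inner_diff_left inner_diff_right inner_commute algebra_simps)

text \<open>Optimality condition: moving mass between two agents along the difference of their
  gradients keeps \<open>x\<close> feasible, so all gradients at an optimum coincide.\<close>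

lemma optimal_gradients_eq:
  fixes f :: "nat \<Rightarrow> 'a::real_inner \<Rightarrow> real"
  assumes grad: "\<And>i y. i < n \<Longrightarrow> GDERIV (f i) y :> gf i y"
    and opt: "optimal n f b xo" and i: "i < n"
  shows "gf i (xo i) = gf 0 (xo 0)"
proof -
  define d where "d = gf i (xo i) - gf 0 (xo 0)"
  define dy where "dy k = (if k = i then d else 0) - (if k = 0 then d else 0)" for k
  define \<Phi> where "\<Phi> t = (\<Sum>k<n. f k (xo k + t *\<^sub>R dy k))" for t
  have "feasible n b (\<lambda>k. xo k + t *\<^sub>R dy k)" for t
    using opt i by (simp add: optimal_def feasible_def dy_def sum.distrib sum_subtractf
        flip: scaleR_sum_right)
  then have min: "\<Phi> 0 \<le> \<Phi> t" for t
    using opt by (simp add: optimal_def \<Phi>_def)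
  have "(\<Phi> has_real_derivative (\<Sum>k<n. inner (dy k) (gf k (xo k)))) (at 0)"
    unfolding \<Phi>_def by (intro DERIV_sum GDERIV_along_line grad) auto
  moreover have "(\<Sum>k<n. inner (dy k) (gf k (xo k))) = inner d d"
  proof -
    have "inner (dy k) (gf k (xo k)) = (if k = i then inner d (gf i (xo i)) else 0)
        - (if k = 0 then inner d (gf 0 (xo 0)) else 0)" for k
      by (simp add: dy_def inner_diff_left)
    then show ?thesis using i by (simp add: sum_subtractf d_def inner_diff_right)
  qed
  ultimately have "inner d d = 0"
    using min by (intro DERIV_local_min[of _ _ 0 1]) auto
  then show ?thesis by (simp add: d_def)
qed

lemma optimal_unique:
  fixes f :: "nat \<Rightarrow> 'a::real_inner \<Rightarrow> real"
  assumes grad: "\<And>i y. i < n \<Longrightarrow> GDERIV (f i) y :> gf i y"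
    and sconv: "\<And>i. i < n \<Longrightarrow> \<mu>i i > 0 \<and> strongly_convex (\<mu>i i) (f i)"
    and opt: "optimal n f b xo" and opty: "optimal n f b y" and i: "i < n"
  shows "y i = xo i"
proof -
  define g where "g = gf 0 (xo 0)"
  define dist_term where "dist_term k = \<mu>i k / 2 * (norm (y k - xo k))^2" for k
  have "f k (y k) \<ge> f k (xo k) + inner (y k - xo k) g + dist_term k" if "k < n" for k
    using strongly_convex_first_order[OF conjunct2[OF sconv[OF that]] grad[OF that, of "xo k"], of "y k"]
      optimal_gradients_eq[OF grad opt that] by (simp add: g_def dist_term_def)
  then have "(\<Sum>k<n. f k (xo k) + inner (y k - xo k) g + dist_term k) \<le> (\<Sum>k<n. f k (y k))"
    by (intro sum_mono) auto
  then have "(\<Sum>k<n. f k (y k)) \<ge> (\<Sum>k<n. f k (xo k)) + inner (\<Sum>k<n. y k - xo k) g + (\<Sum>k<n. dist_term k)"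
    by (simp add: sum.distrib inner_sum_left)
  moreover have "(\<Sum>k<n. y k - xo k) = 0"
    using opt opty by (simp add: optimal_def feasible_def sum_subtractf)
  moreover have "(\<Sum>k<n. f k (y k)) \<le> (\<Sum>k<n. f k (xo k))"
    using opt opty by (simp add: optimal_def)
  ultimately have "(\<Sum>k<n. dist_term k) \<le> 0" by simp
  moreover have "\<forall>k\<in>{..<n}. 0 \<le> dist_term k"
    using sconv by (simp add: dist_term_def less_imp_le)
  ultimately have "dist_term i = 0"
    using i sum_nonneg_eq_0_iff[of "{..<n}" dist_term] sum_nonneg[of "{..<n}" dist_term] by fastforce
  then show ?thesis using sconv[OF i] by (simp add: dist_term_def)
qed

section \<open>Stacked vectors\<close>

definition stacked_inner :: "nat \<Rightarrow> (nat \<Rightarrow> 'a::real_inner) \<Rightarrow> (nat \<Rightarrow> 'a) \<Rightarrow> real" where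
  "stacked_inner n u v = (\<Sum>i<n. inner (u i) (v i))"

definition stacked_sum :: "nat \<Rightarrow> (nat \<Rightarrow> 'a::real_vector) \<Rightarrow> 'a" where
  "stacked_sum n u = (\<Sum>i<n. u i)"

definition centred :: "nat \<Rightarrow> (nat \<Rightarrow> 'a::real_vector) \<Rightarrow> nat \<Rightarrow> 'a" where
  "centred n u = (\<lambda>i. u i - (1 / real n) *\<^sub>R stacked_sum n u)"

text \<open>\<open>lap_action n a\<close> is the Kronecker product of the Laplacian with the identity, acting
  on stacked vectors.\<close>

definition lap_action :: "nat \<Rightarrow> (nat \<Rightarrow> nat \<Rightarrow> real) \<Rightarrow> (nat \<Rightarrow> 'a::real_vector) \<Rightarrow> nat \<Rightarrow> 'a" where
  "lap_action n a u = (\<lambda>i. \<Sum>j<n. lap n a i j *\<^sub>R u j)"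

lemma stacked_inner_commute: "stacked_inner n u v = stacked_inner n v u"
  by (simp add: stacked_inner_def inner_commute)

lemma stacked_inner_self_nonneg: "stacked_inner n u u \<ge> 0"
  by (simp add: stacked_inner_def sum_nonneg)

lemma stacked_inner_simps:
  "stacked_inner n u (\<lambda>i. v i + w i) = stacked_inner n u v + stacked_inner n u w"
  "stacked_inner n (\<lambda>i. v i + w i) u = stacked_inner n v u + stacked_inner n w u"
  "stacked_inner n u (\<lambda>i. v i - w i) = stacked_inner n u v - stacked_inner n u w"
  "stacked_inner n (\<lambda>i. v i - w i) u = stacked_inner n v u - stacked_inner n w u"
  "stacked_inner n u (\<lambda>i. - v i) = - stacked_inner n u v"
  "stacked_inner n (\<lambda>i. - v i) u = - stacked_inner n v u"
  "stacked_inner n u (\<lambda>i. c *\<^sub>R v i) = c * stacked_inner n u v"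
  "stacked_inner n (\<lambda>i. c *\<^sub>R v i) u = c * stacked_inner n v u"
  by (simp_all add: stacked_inner_def inner_add_left inner_add_right inner_diff_left inner_diff_right
      sum.distrib sum_subtractf sum_negf sum_distrib_left)

lemma stacked_sum_simps:
  "stacked_sum n (\<lambda>i. v i + w i) = stacked_sum n v + stacked_sum n w"
  "stacked_sum n (\<lambda>i. v i - w i) = stacked_sum n v - stacked_sum n w"
  "stacked_sum n (\<lambda>i. - v i) = - stacked_sum n v"
  "stacked_sum n (\<lambda>i. c *\<^sub>R v i) = c *\<^sub>R stacked_sum n v"
  by (simp_all add: stacked_sum_def sum.distrib sum_subtractf sum_negf scaleR_sum_right)

lemma stacked_sum_centred: "n > 0 \<Longrightarrow> stacked_sum n (centred n u) = 0"
  by (simp add: centred_def stacked_sum_def sum_subtractf sum_constant_scaleR)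

lemma stacked_inner_centred_left:
  assumes "n > 0"
  shows "stacked_inner n (centred n u) v = stacked_inner n u v - inner (stacked_sum n u) (stacked_sum n v) / n"
proof -
  have "(\<Sum>i<n. inner ((1 / real n) *\<^sub>R stacked_sum n u) (v i)) = inner (stacked_sum n u) (stacked_sum n v) / n"
    by (simp add: stacked_sum_def inner_sum_right sum_divide_distrib)
  then show ?thesis by (simp add: stacked_inner_def centred_def inner_diff_left sum_subtractf)
qed

lemma stacked_inner_centred:
  assumes "n > 0"
  shows "stacked_inner n (centred n u) (centred n v) = stacked_inner n u v - inner (stacked_sum n u) (stacked_sum n v) / n"
  using stacked_inner_centred_left[OF assms, of v "centred n u"] stacked_inner_centred_left[OF assms, of u v]
  by (simp add: stacked_inner_commute stacked_sum_centred[OF assms])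

lemma stacked_sum_inner_le:
  assumes "n > 0"
  shows "inner (stacked_sum n u) (stacked_sum n u) \<le> n * stacked_inner n u u"
  using stacked_inner_self_nonneg[of n "centred n u"] stacked_inner_centred[OF assms, of u u] assms
  by (simp add: divide_le_eq mult.commute)

lemma inner_le_young:
  fixes u v :: "'a::real_inner"
  shows "c * inner u v \<le> c^2 * inner u u + inner v v / 4"
proof -
  have "0 \<le> inner (c *\<^sub>R u - (1/2) *\<^sub>R v) (c *\<^sub>R u - (1/2) *\<^sub>R v)" by simp
  then show ?thesis
    by (simp add: inner_diff_left inner_diff_right inner_commute power2_eq_square algebra_simps)
qed

lemma stacked_inner_le_young:
  "c * stacked_inner n u v \<le> c^2 * stacked_inner n u u + stacked_inner n v v / 4"
  unfolding stacked_inner_def sum_distrib_left sum_divide_distrib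
  by (simp add: inner_le_young sum_mono flip: sum.distrib)

lemma stacked_sum_lipschitz_bound:
  assumes "n > 0" and "\<And>i. i < n \<Longrightarrow> norm (G i) \<le> l * norm (X i)"
  shows "inner (stacked_sum n G) (stacked_sum n G) \<le> n * l^2 * stacked_inner n X X"
proof -
  have "stacked_inner n G G = (\<Sum>i<n. (norm (G i))^2)"
    by (simp add: stacked_inner_def power2_norm_eq_inner)
  also have "\<dots> \<le> (\<Sum>i<n. (l * norm (X i))^2)"
    using assms(2) by (intro sum_mono power_mono) auto
  also have "\<dots> = l^2 * stacked_inner n X X"
    by (simp add: stacked_inner_def sum_distrib_left power_mult_distrib power2_norm_eq_inner)
  finally have "n * stacked_inner n G G \<le> n * (l^2 * stacked_inner n X X)"
    by (rule mult_left_mono) simp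
  with stacked_sum_inner_le[OF assms(1), of G] show ?thesis by (simp add: mult.assoc)
qed

lemma stacked_sum_lap_action: "weight_balanced n a \<Longrightarrow> stacked_sum n (lap_action n a u) = 0"
  unfolding stacked_sum_def lap_action_def
  by (subst sum.swap) (simp add: lap_col_sum flip: scaleR_sum_left)

lemma lap_action_centred:
  assumes "i < n"
  shows "lap_action n a (centred n u) i = lap_action n a u i"
proof -
  have "lap_action n a (centred n u) i
      = lap_action n a u i - (\<Sum>j<n. lap n a i j) *\<^sub>R ((1 / real n) *\<^sub>R stacked_sum n u)"
    by (simp add: lap_action_def centred_def scaleR_diff_right sum_subtractf scaleR_sum_left
        del: scaleR_scaleR)
  then show ?thesis by (simp add: lap_row_sum[OF assms])
qed

lemma eta2_lap_hat_stacked: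
  fixes u :: "nat \<Rightarrow> 'a::euclidean_space"
  assumes n: "n \<ge> 2" and wb: "weight_balanced n a"
    and nn: "\<And>i j. i < n \<Longrightarrow> j < n \<Longrightarrow> a i j \<ge> 0"
    and sc: "strongly_connected n a" and sum0: "stacked_sum n u = 0"
  shows "eta2 (lap_hat n a) * stacked_inner n u u \<le> stacked_inner n u (lap_action n a u)"
proof -
  let ?u = "\<lambda>b i. inner (u i) b"
  have "stacked_inner n u (lap_action n a u) = (\<Sum>i<n. \<Sum>j<n. \<Sum>b\<in>Basis. lap n a i j * ?u b i * ?u b j)"
    by (simp add: stacked_inner_def lap_action_def inner_sum_right euclidean_inner[of "u _" "u _"]
        sum_distrib_left mult.assoc)
  then have quad: "stacked_inner n u (lap_action n a u) = (\<Sum>b\<in>Basis. lap_quad n a (?u b))"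
    by (simp add: lap_quad_def sum.swap[of _ Basis])
  have norm: "stacked_inner n u u = (\<Sum>b\<in>Basis. \<Sum>i<n. (?u b i)^2)"
    unfolding stacked_inner_def
    by (subst sum.swap) (simp add: euclidean_inner[of "u _" "u _"] power2_eq_square)
  have "eta2 (lap_hat n a) * (\<Sum>i<n. (?u b i)^2) \<le> lap_quad n a (?u b)" for b
  proof (rule eta2_lap_hat(2)[OF n wb nn sc])
    show "(\<Sum>i<n. ?u b i) = 0"
      using sum0 by (simp add: stacked_sum_def flip: inner_sum_left)
  qed
  then show ?thesis
    unfolding quad norm sum_distrib_left by (rule sum_mono)
qed

lemma disagreement_le_lap_action:
  fixes L :: "nat \<Rightarrow> 'a::euclidean_space"
  assumes n: "n \<ge> 2" and wb: "weight_balanced n a"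
    and nn: "\<And>i j. i < n \<Longrightarrow> j < n \<Longrightarrow> a i j \<ge> 0"
    and sc: "strongly_connected n a" and \<eta>: "\<eta> \<le> eta2 (lap_hat n a)"
  shows "\<eta> * stacked_inner n (centred n L) (centred n L) \<le> stacked_inner n L (lap_action n a L)"
proof -
  have n0: "n > 0" using n by simp
  have "stacked_inner n (centred n L) (lap_action n a (centred n L)) = stacked_inner n (centred n L) (lap_action n a L)"
    by (simp add: stacked_inner_def lap_action_centred)
  also have "\<dots> = stacked_inner n L (lap_action n a L)"
    by (simp add: stacked_inner_centred_left[OF n0] stacked_sum_lap_action[OF wb])
  finally have "eta2 (lap_hat n a) * stacked_inner n (centred n L) (centred n L) \<le> stacked_inner n L (lap_action n a L)"
    using eta2_lap_hat_stacked[OF n wb nn sc stacked_sum_centred[OF n0], of L] by simp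
  moreover have "\<eta> * stacked_inner n (centred n L) (centred n L) \<le> eta2 (lap_hat n a) * stacked_inner n (centred n L) (centred n L)"
    using \<eta> stacked_inner_self_nonneg by (rule mult_right_mono)
  ultimately show ?thesis by linarith
qed

lemma has_real_derivative_stacked_inner:
  fixes U V :: "real \<Rightarrow> nat \<Rightarrow> 'a::real_inner"
  assumes "\<And>i. i < n \<Longrightarrow> ((\<lambda>s. U s i) has_vector_derivative U' i) (at t)"
    and "\<And>i. i < n \<Longrightarrow> ((\<lambda>s. V s i) has_vector_derivative V' i) (at t)"
  shows "((\<lambda>s. stacked_inner n (U s) (V s)) has_real_derivative
           stacked_inner n (U t) V' + stacked_inner n U' (V t)) (at t)"
  unfolding stacked_inner_def has_real_derivative_iff_has_vector_derivative sum.distrib[symmetric]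
  by (intro has_vector_derivative_sum bounded_bilinear.has_vector_derivative[OF bounded_bilinear_inner] assms)
    auto

lemma has_vector_derivative_stacked_sum:
  assumes "\<And>i. i < n \<Longrightarrow> ((\<lambda>s. U s i) has_vector_derivative U' i) (at t)"
  shows "((\<lambda>s. stacked_sum n (U s)) has_vector_derivative stacked_sum n U') (at t)"
  unfolding stacked_sum_def by (intro has_vector_derivative_sum assms) auto

lemma has_real_derivative_inner:
  fixes u v :: "real \<Rightarrow> 'a::real_inner"
  assumes "(u has_vector_derivative u') (at t)" "(v has_vector_derivative v') (at t)"
  shows "((\<lambda>s. inner (u s) (v s)) has_real_derivative inner (u t) v' + inner u' (v t)) (at t)"
  using bounded_bilinear.has_vector_derivative[OF bounded_bilinear_inner assms]
  by (simp add: has_real_derivative_iff_has_vector_derivative)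

section \<open>The Lyapunov function\<close>

text \<open>\<open>mixed \<alpha> Z L = Z + \<alpha> L\<close> is the combination of the error variables whose derivative
  \<open>\<alpha> (X - Z)\<close> along IDEA no longer involves the Laplacian.\<close>

definition mixed :: "real \<Rightarrow> (nat \<Rightarrow> 'a::real_vector) \<Rightarrow> (nat \<Rightarrow> 'a) \<Rightarrow> nat \<Rightarrow> 'a" where
  "mixed \<alpha> Z L = (\<lambda>i. Z i + \<alpha> *\<^sub>R L i)"

text \<open>In the derivative of \<open>lyap\<close>, the term with coefficient \<open>- 3 / (2 \<alpha> n)\<close> cancels the
  consensus part of the indefinite cross term \<open>3 \<langle>X, W\<rangle>\<close>, and the cross term weighted by \<open>e\<close>
  damps the sum of \<open>W\<close>, on which the Laplacian does not act.\<close>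

definition lyap :: "nat \<Rightarrow> real \<Rightarrow> real \<Rightarrow> (nat \<Rightarrow> 'a::real_inner) \<Rightarrow> (nat \<Rightarrow> 'a) \<Rightarrow> (nat \<Rightarrow> 'a) \<Rightarrow> real" where
  "lyap n \<alpha> e X L Z = stacked_inner n X X / 2 + stacked_inner n (mixed \<alpha> Z L) (mixed \<alpha> Z L) / \<alpha>
     + \<alpha> * stacked_inner n L L
     - 3 / (2 * \<alpha> * n) * inner (stacked_sum n (mixed \<alpha> Z L)) (stacked_sum n (mixed \<alpha> Z L))
     + e / n * inner (stacked_sum n X) (stacked_sum n (mixed \<alpha> Z L))"

definition lyap_deriv :: "nat \<Rightarrow> real \<Rightarrow> real \<Rightarrow> (nat \<Rightarrow> 'a::real_inner) \<Rightarrow> (nat \<Rightarrow> 'a) \<Rightarrow> (nat \<Rightarrow> 'a)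
    \<Rightarrow> (nat \<Rightarrow> 'a) \<Rightarrow> (nat \<Rightarrow> 'a) \<Rightarrow> (nat \<Rightarrow> 'a) \<Rightarrow> real" where
  "lyap_deriv n \<alpha> e X L Z X' L' Z' = stacked_inner n X X'
     + 2 / \<alpha> * stacked_inner n (mixed \<alpha> Z L) (mixed \<alpha> Z' L') + 2 * \<alpha> * stacked_inner n L L'
     - 3 / (\<alpha> * n) * inner (stacked_sum n (mixed \<alpha> Z L)) (stacked_sum n (mixed \<alpha> Z' L'))
     + e / n * (inner (stacked_sum n X') (stacked_sum n (mixed \<alpha> Z L))
                + inner (stacked_sum n X) (stacked_sum n (mixed \<alpha> Z' L')))"

lemma stacked_sum_mixed:
  "stacked_sum n Z = 0 \<Longrightarrow> stacked_sum n (mixed \<alpha> Z L) = \<alpha> *\<^sub>R stacked_sum n L"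
  by (simp add: mixed_def stacked_sum_simps)

lemma lyap_centred:
  fixes X L Z :: "nat \<Rightarrow> 'a::real_inner"
  assumes n: "n > 0" and \<alpha>: "\<alpha> > 0" and sumZ: "stacked_sum n Z = 0"
  defines "W \<equiv> mixed \<alpha> Z L"
  shows "lyap n \<alpha> e X L Z = stacked_inner n X X / 2 + stacked_inner n (centred n W) (centred n W) / \<alpha>
     + inner (stacked_sum n W) (stacked_sum n W) / (2 * \<alpha> * n)
     + e / n * inner (stacked_sum n X) (stacked_sum n W) + \<alpha> * stacked_inner n (centred n L) (centred n L)"
proof -
  have SW: "stacked_sum n W = \<alpha> *\<^sub>R stacked_sum n L"
    by (simp add: W_def stacked_sum_mixed[OF sumZ])
  show ?thesis
    using n \<alpha> unfolding lyap_def W_def[symmetric] stacked_inner_centred[OF n] SW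
    by (simp add: field_simps power2_eq_square)
qed

lemma lyap_deriv_along_flow:
  fixes X L Z G :: "nat \<Rightarrow> 'a::real_inner" and \<beta> :: real and a :: "nat \<Rightarrow> nat \<Rightarrow> real"
  assumes n: "n > 0" and \<alpha>: "\<alpha> > 0" and sumZ: "stacked_sum n Z = 0"
  defines "W \<equiv> mixed \<alpha> Z L"
    and "X' \<equiv> \<lambda>i. - \<alpha> *\<^sub>R (G i + L i) - (X i - Z i)"
    and "L' \<equiv> \<lambda>i. X i - Z i - \<beta> *\<^sub>R lap_action n a L i"
    and "Z' \<equiv> \<lambda>i. (\<alpha> * \<beta>) *\<^sub>R lap_action n a L i"
  shows "lyap_deriv n \<alpha> e X L Z X' L' Z' =
     - \<alpha> * stacked_inner n X G - stacked_inner n X X + 3 * stacked_inner n (centred n X) (centred n W)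
     - 2 * stacked_inner n (centred n W) (centred n W)
     + 2 * \<alpha>^2 * stacked_inner n (centred n L) (centred n L) - 2 * \<alpha> * \<beta> * stacked_inner n L (lap_action n a L)
     + e / n * (- \<alpha> * inner (stacked_sum n G) (stacked_sum n W) - inner (stacked_sum n W) (stacked_sum n W)
                - inner (stacked_sum n X) (stacked_sum n W) + \<alpha> * inner (stacked_sum n X) (stacked_sum n X))"
proof -
  define SX SL SG where "SX = stacked_sum n X" and "SL = stacked_sum n L" and "SG = stacked_sum n G"
  have SW: "stacked_sum n W = \<alpha> *\<^sub>R SL"
    by (simp add: W_def SL_def stacked_sum_mixed[OF sumZ])
  have W': "mixed \<alpha> Z' L' = (\<lambda>i. \<alpha> *\<^sub>R (X i - Z i))"
    by (auto simp: mixed_def Z'_def L'_def fun_eq_iff algebra_simps)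
  have SW': "stacked_sum n (mixed \<alpha> Z' L') = \<alpha> *\<^sub>R SX"
    using sumZ by (simp add: W' SX_def stacked_sum_simps)
  have SX': "stacked_sum n X' = - \<alpha> *\<^sub>R (SG + SL) - SX"
    using sumZ by (simp add: X'_def SG_def SL_def SX_def stacked_sum_simps)
  have commute: "stacked_inner n L X = stacked_inner n X L" "stacked_inner n Z X = stacked_inner n X Z"
    "stacked_inner n L Z = stacked_inner n Z L"
    by (simp_all add: stacked_inner_commute)
  have "lyap_deriv n \<alpha> e X L Z X' L' Z' =
      (- \<alpha> * stacked_inner n X G - \<alpha> * stacked_inner n X L - stacked_inner n X X + stacked_inner n X Z)
      + 2 / \<alpha> * (\<alpha> * stacked_inner n X Z - \<alpha> * stacked_inner n Z Z
                  + \<alpha>^2 * stacked_inner n X L - \<alpha>^2 * stacked_inner n Z L)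
      + 2 * \<alpha> * (stacked_inner n X L - stacked_inner n Z L - \<beta> * stacked_inner n L (lap_action n a L))
      - 3 / (\<alpha> * n) * (\<alpha>^2 * inner SX SL)
      + e / n * (- (\<alpha>^2 * inner SG SL) - \<alpha>^2 * inner SL SL - \<alpha> * inner SX SL + \<alpha> * inner SX SX)"
    unfolding lyap_deriv_def W_def[symmetric] SW SW' SX' SX_def[symmetric]
    by (simp add: X'_def L'_def Z'_def W' W_def mixed_def stacked_inner_simps commute
        inner_add_left inner_diff_left inner_commute[of SL SX] algebra_simps power2_eq_square)
  also have "\<dots> = - \<alpha> * stacked_inner n X G - stacked_inner n X X + 3 * stacked_inner n (centred n X) (centred n W)
     - 2 * stacked_inner n (centred n W) (centred n W)
     + 2 * \<alpha>^2 * stacked_inner n (centred n L) (centred n L) - 2 * \<alpha> * \<beta> * stacked_inner n L (lap_action n a L)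
     + e / n * (- \<alpha> * inner SG (stacked_sum n W) - inner (stacked_sum n W) (stacked_sum n W)
                - inner SX (stacked_sum n W) + \<alpha> * inner SX SX)"
    using n \<alpha> unfolding stacked_inner_centred[OF n] SW SX_def[symmetric] SL_def[symmetric]
    by (simp add: W_def mixed_def stacked_inner_simps commute field_simps power2_eq_square)
  finally show ?thesis by (simp add: SX_def SG_def)
qed

text \<open>In the \<open>lyap_alg\<close> lemmas, with \<open>W = mixed \<alpha> Z L\<close>, \<open>sX\<close>, \<open>sXc\<close>, \<open>sWc\<close>, \<open>sLc\<close> stand for the squared norms
  of \<open>X\<close>, \<open>centred n X\<close>, \<open>centred n W\<close>, \<open>centred n L\<close>; \<open>sSX\<close>, \<open>sSW\<close>, \<open>sSG\<close> for
  those of the sums of \<open>X\<close>, \<open>W\<close>, \<open>G\<close>; \<open>cXG\<close> and \<open>cXW\<close> for the inner products of \<open>X\<close>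
  with \<open>G\<close> and of \<open>centred n X\<close> with \<open>centred n W\<close>; \<open>q\<close> for the Laplacian form of \<open>L\<close>;
  and \<open>pG\<close>, \<open>pX\<close> for the inner products of the sums of \<open>G\<close> and \<open>X\<close> with that of \<open>W\<close>.\<close>

lemma lyap_alg_derivative_bound:
  fixes \<alpha> \<beta> \<eta> \<mu> l e n sX sXc sWc sSW sSX sSG sLc cXG cXW q pG pX :: real
  assumes "\<alpha> > 0" "n > 0" "\<beta> \<ge> 0" "e > 0"
    and "cXG \<ge> \<mu> * sX" "3 * cXW \<le> 9/4 * sXc + sWc" "sXc \<le> sX" "q \<ge> \<eta> * sLc"
    and "- \<alpha> * pG \<le> \<alpha>^2 * sSG + sSW / 4" "- pX \<le> sSX + sSW / 4"
    and "sSG \<le> n * l^2 * sX" "sSX \<le> n * sX"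
  shows "- \<alpha> * cXG - sX + 3 * cXW - 2 * sWc + 2 * \<alpha>^2 * sLc - 2 * \<alpha> * \<beta> * q
           + e / n * (- \<alpha> * pG - sSW - pX + \<alpha> * sSX)
         \<le> - (\<alpha> * \<mu> - 5/4 - e * (\<alpha>^2 * l^2 + 1 + \<alpha>)) * sX - sWc
           - 2 * \<alpha> * (\<beta> * \<eta> - \<alpha>) * sLc - e / (2 * n) * sSW"
proof -
  define D where "D = \<alpha> * \<mu> - 5/4 - e * (\<alpha>^2 * l^2 + 1 + \<alpha>)"
  have "\<alpha> * (\<mu> * sX) \<le> \<alpha> * cXG" using assms by (intro mult_left_mono) auto
  then have T1: "- \<alpha> * cXG - sX + 3 * cXW \<le> - \<alpha> * \<mu> * sX - sX + 9/4 * sX + sWc"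
    using assms(6,7) by (simp add: mult.assoc)
  have "(2 * \<alpha> * \<beta>) * (\<eta> * sLc) \<le> (2 * \<alpha> * \<beta>) * q" using assms by (intro mult_left_mono) auto
  then have T2: "2 * \<alpha>^2 * sLc - 2 * \<alpha> * \<beta> * q \<le> - 2 * \<alpha> * (\<beta> * \<eta> - \<alpha>) * sLc"
    by (simp add: algebra_simps power2_eq_square)
  have "- \<alpha> * pG - sSW - pX + \<alpha> * sSX \<le> \<alpha>^2 * (n * l^2 * sX) + (1 + \<alpha>) * (n * sX) - sSW / 2"
  proof -
    have "- \<alpha> * pG - sSW - pX + \<alpha> * sSX \<le> \<alpha>^2 * sSG + (1 + \<alpha>) * sSX - sSW / 2"
      using assms(9,10) by (simp add: algebra_simps)
    moreover have "\<alpha>^2 * sSG \<le> \<alpha>^2 * (n * l^2 * sX)" using assms by (intro mult_left_mono) auto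
    moreover have "(1 + \<alpha>) * sSX \<le> (1 + \<alpha>) * (n * sX)" using assms by (intro mult_left_mono) auto
    ultimately show ?thesis by linarith
  qed
  then have "e / n * (- \<alpha> * pG - sSW - pX + \<alpha> * sSX)
      \<le> e / n * (\<alpha>^2 * (n * l^2 * sX) + (1 + \<alpha>) * (n * sX) - sSW / 2)"
    using assms by (intro mult_left_mono) auto
  also have "\<dots> = e * (\<alpha>^2 * l^2 + 1 + \<alpha>) * sX - e / (2 * n) * sSW"
    using assms by (simp add: field_simps)
  finally have T3: "e / n * (- \<alpha> * pG - sSW - pX + \<alpha> * sSX)
      \<le> e * (\<alpha>^2 * l^2 + 1 + \<alpha>) * sX - e / (2 * n) * sSW" .
  have "D * sX = \<alpha> * \<mu> * sX - 5/4 * sX - e * (\<alpha>^2 * l^2 + 1 + \<alpha>) * sX"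
    by (simp add: D_def algebra_simps)
  with T1 T2 T3 assms(7) show ?thesis unfolding D_def[symmetric] by linarith
qed

lemma lyap_alg_bounds:
  fixes \<alpha> e n sX sWc sSW sSX sLc pX :: real
  assumes "\<alpha> > 0" "n > 0" "sSW \<ge> 0" "e^2 \<le> 1 / (4 * \<alpha>)"
    and "\<bar>e * pX\<bar> \<le> sSX / 4 + e^2 * sSW" "sSX \<le> n * sX"
  defines "V \<equiv> sX / 2 + sWc / \<alpha> + sSW / (2 * \<alpha> * n) + e / n * pX + \<alpha> * sLc"
  shows "sX / 4 + sWc / \<alpha> + sSW / (4 * \<alpha> * n) + \<alpha> * sLc \<le> V"
    and "V \<le> 3/4 * sX + sWc / \<alpha> + 3 * sSW / (4 * \<alpha> * n) + \<alpha> * sLc"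
proof -
  have "e^2 * sSW \<le> 1 / (4 * \<alpha>) * sSW" using assms by (intro mult_right_mono) auto
  then have "\<bar>e * pX\<bar> \<le> n * sX / 4 + sSW / (4 * \<alpha>)" using assms by simp
  then have "\<bar>e * pX\<bar> / n \<le> (n * sX / 4 + sSW / (4 * \<alpha>)) / n"
    using assms by (intro divide_right_mono) auto
  also have "\<dots> = sX / 4 + sSW / (4 * \<alpha> * n)" using assms by (simp add: field_simps)
  finally have "\<bar>e / n * pX\<bar> \<le> sX / 4 + sSW / (4 * \<alpha> * n)"
    using assms by (simp add: abs_mult)
  moreover have "sSW / (2 * \<alpha> * n) = 2 * (sSW / (4 * \<alpha> * n))"
    and "3 * sSW / (4 * \<alpha> * n) = 3 * (sSW / (4 * \<alpha> * n))"
    by (simp_all add: field_simps)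
  ultimately show "sX / 4 + sWc / \<alpha> + sSW / (4 * \<alpha> * n) + \<alpha> * sLc \<le> V"
    and "V \<le> 3/4 * sX + sWc / \<alpha> + 3 * sSW / (4 * \<alpha> * n) + \<alpha> * sLc"
    unfolding V_def abs_le_iff by linarith+
qed

definition lyap_rate :: "real \<Rightarrow> real \<Rightarrow> real \<Rightarrow> real \<Rightarrow> real" where
  "lyap_rate \<alpha> e D G = min (min (4 * D / 3) \<alpha>) (min (2 * \<alpha> * e / 3) (2 * G))"

lemma lyap_rate_pos: "\<alpha> > 0 \<Longrightarrow> e > 0 \<Longrightarrow> D > 0 \<Longrightarrow> G > 0 \<Longrightarrow> lyap_rate \<alpha> e D G > 0"
  by (simp add: lyap_rate_def)

lemma lyap_alg_decay:
  fixes \<alpha> e D G n sX sWc sSW sLc V Vd :: real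
  assumes "\<alpha> > 0" "e > 0" "D > 0" "G > 0" "n > 0"
    and "sX \<ge> 0" "sWc \<ge> 0" "sSW \<ge> 0" "sLc \<ge> 0"
    and Vd: "Vd \<le> - D * sX - sWc - 2 * \<alpha> * G * sLc - e / (2 * n) * sSW"
    and V: "V \<le> 3/4 * sX + sWc / \<alpha> + 3 * sSW / (4 * \<alpha> * n) + \<alpha> * sLc"
  shows "Vd \<le> - lyap_rate \<alpha> e D G * V"
proof -
  define \<kappa> where "\<kappa> = lyap_rate \<alpha> e D G"
  have "\<kappa> \<le> 4 * D / 3" "\<kappa> \<le> \<alpha>" "\<kappa> \<le> 2 * \<alpha> * e / 3" "\<kappa> \<le> 2 * G"
    by (simp_all add: \<kappa>_def lyap_rate_def)
  then have \<kappa>: "\<kappa> > 0" "\<kappa> * (3/4) \<le> D" "\<kappa> / \<alpha> \<le> 1" "\<kappa> * 3 / (4 * \<alpha>) \<le> e / 2" "\<kappa> * \<alpha> \<le> 2 * \<alpha> * G"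
    using assms lyap_rate_pos[of \<alpha> e D G] by (auto simp: \<kappa>_def field_simps)
  have "\<kappa> * V \<le> \<kappa> * (3/4 * sX + sWc / \<alpha> + 3 * sSW / (4 * \<alpha> * n) + \<alpha> * sLc)"
    using V \<kappa> by (intro mult_left_mono) auto
  also have "\<dots> = (\<kappa> * (3/4)) * sX + (\<kappa> / \<alpha>) * sWc + (\<kappa> * 3 / (4 * \<alpha>)) * (sSW / n) + (\<kappa> * \<alpha>) * sLc"
    using assms by (simp add: field_simps)
  also have "\<dots> \<le> D * sX + 1 * sWc + (e / 2) * (sSW / n) + (2 * \<alpha> * G) * sLc"
    using assms \<kappa> by (intro add_mono mult_right_mono) auto
  finally show ?thesis using Vd by (simp add: \<kappa>_def field_simps)
qed

lemma lyap_bounds: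
  fixes X L Z :: "nat \<Rightarrow> 'a::real_inner"
  assumes n: "n > 0" and \<alpha>: "\<alpha> > 0" and sumZ: "stacked_sum n Z = 0" and e: "e^2 \<le> 1 / (4 * \<alpha>)"
  defines "W \<equiv> mixed \<alpha> Z L"
  shows "stacked_inner n X X / 4 + stacked_inner n (centred n W) (centred n W) / \<alpha>
      + inner (stacked_sum n W) (stacked_sum n W) / (4 * \<alpha> * n)
      + \<alpha> * stacked_inner n (centred n L) (centred n L) \<le> lyap n \<alpha> e X L Z"
    and "lyap n \<alpha> e X L Z \<le> 3/4 * stacked_inner n X X + stacked_inner n (centred n W) (centred n W) / \<alpha>
      + 3 * inner (stacked_sum n W) (stacked_sum n W) / (4 * \<alpha> * n)
      + \<alpha> * stacked_inner n (centred n L) (centred n L)"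
proof -
  define SX SW where "SX = stacked_sum n X" and "SW = stacked_sum n W"
  have "\<bar>e * inner SX SW\<bar> \<le> inner SX SX / 4 + e^2 * inner SW SW"
    using inner_le_young[of e SW SX] inner_le_young[of "- e" SW SX]
    by (simp add: abs_le_iff inner_commute add.commute)
  note alg = lyap_alg_bounds[where n = "real n", OF _ _ _ e this]
  show "stacked_inner n X X / 4 + stacked_inner n (centred n W) (centred n W) / \<alpha>
      + inner (stacked_sum n W) (stacked_sum n W) / (4 * \<alpha> * n)
      + \<alpha> * stacked_inner n (centred n L) (centred n L) \<le> lyap n \<alpha> e X L Z"
    and "lyap n \<alpha> e X L Z \<le> 3/4 * stacked_inner n X X + stacked_inner n (centred n W) (centred n W) / \<alpha>
      + 3 * inner (stacked_sum n W) (stacked_sum n W) / (4 * \<alpha> * n)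
      + \<alpha> * stacked_inner n (centred n L) (centred n L)"
    unfolding lyap_centred[OF n \<alpha> sumZ] W_def[symmetric] SX_def[symmetric] SW_def[symmetric]
    using \<alpha> n stacked_sum_inner_le[OF n, of X]
    by (intro alg; simp add: SX_def)+
qed

lemma lyap_deriv_along_flow_le:
  fixes X L Z G :: "nat \<Rightarrow> 'a::euclidean_space" and \<beta> :: real and a :: "nat \<Rightarrow> nat \<Rightarrow> real"
  assumes n: "n \<ge> 2" and \<alpha>: "\<alpha> > 0" and \<beta>: "\<beta> \<ge> 0" and e: "e > 0"
    and wb: "weight_balanced n a" and nn: "\<And>i j. i < n \<Longrightarrow> j < n \<Longrightarrow> a i j \<ge> 0"
    and sc: "strongly_connected n a" and \<eta>: "\<eta> \<le> eta2 (lap_hat n a)"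
    and sumZ: "stacked_sum n Z = 0"
    and mono: "\<And>i. i < n \<Longrightarrow> inner (X i) (G i) \<ge> \<mu> * (norm (X i))^2"
    and lip: "\<And>i. i < n \<Longrightarrow> norm (G i) \<le> l * norm (X i)"
  defines "W \<equiv> mixed \<alpha> Z L"
  shows "lyap_deriv n \<alpha> e X L Z (\<lambda>i. - \<alpha> *\<^sub>R (G i + L i) - (X i - Z i))
      (\<lambda>i. X i - Z i - \<beta> *\<^sub>R lap_action n a L i) (\<lambda>i. (\<alpha> * \<beta>) *\<^sub>R lap_action n a L i)
    \<le> - (\<alpha> * \<mu> - 5/4 - e * (\<alpha>^2 * l^2 + 1 + \<alpha>)) * stacked_inner n X X
      - stacked_inner n (centred n W) (centred n W)
      - 2 * \<alpha> * (\<beta> * \<eta> - \<alpha>) * stacked_inner n (centred n L) (centred n L)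
      - e / (2 * real n) * inner (stacked_sum n W) (stacked_sum n W)"
proof -
  have n0: "n > 0" using n by simp
  define SX SG SW where "SX = stacked_sum n X" and "SG = stacked_sum n G" and "SW = stacked_sum n W"
  have "\<mu> * stacked_inner n X X \<le> stacked_inner n X G"
    unfolding stacked_inner_def sum_distrib_left power2_norm_eq_inner[symmetric]
    by (intro sum_mono mono) simp
  moreover have "3 * stacked_inner n (centred n X) (centred n W)
      \<le> 9/4 * stacked_inner n (centred n X) (centred n X) + stacked_inner n (centred n W) (centred n W)"
    using stacked_inner_le_young[of "3/2" n "centred n X" "\<lambda>i. 2 *\<^sub>R centred n W i"]
    by (simp add: stacked_inner_simps power2_eq_square)
  moreover have "stacked_inner n (centred n X) (centred n X) \<le> stacked_inner n X X"
    using n0 by (simp add: stacked_inner_centred)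
  moreover have "\<eta> * stacked_inner n (centred n L) (centred n L) \<le> stacked_inner n L (lap_action n a L)"
    by (rule disagreement_le_lap_action[OF n wb nn sc \<eta>])
  moreover have "- \<alpha> * inner SG SW \<le> \<alpha>^2 * inner SG SG + inner SW SW / 4"
    using inner_le_young[of "- \<alpha>" SG SW] by simp
  moreover have "- inner SX SW \<le> inner SX SX + inner SW SW / 4"
    using inner_le_young[of "- 1" SX SW] by simp
  moreover have "inner SG SG \<le> n * l^2 * stacked_inner n X X"
    unfolding SG_def by (rule stacked_sum_lipschitz_bound[OF n0 lip])
  moreover have "inner SX SX \<le> n * stacked_inner n X X"
    unfolding SX_def by (rule stacked_sum_inner_le[OF n0])
  ultimately show ?thesis
    unfolding lyap_deriv_along_flow[OF n0 \<alpha> sumZ] W_def[symmetric] SX_def[symmetric]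
      SG_def[symmetric] SW_def[symmetric]
    using \<alpha> n0 \<beta> e by (intro lyap_alg_derivative_bound[where n = "real n"]) auto
qed

lemma lyap_deriv_le:
  fixes X L Z G :: "nat \<Rightarrow> 'a::euclidean_space" and \<beta> :: real and a :: "nat \<Rightarrow> nat \<Rightarrow> real"
  assumes n: "n \<ge> 2" and \<alpha>: "\<alpha> > 0" and \<beta>: "\<beta> \<ge> 0"
    and wb: "weight_balanced n a" and nn: "\<And>i j. i < n \<Longrightarrow> j < n \<Longrightarrow> a i j \<ge> 0"
    and sc: "strongly_connected n a" and \<eta>: "\<eta> \<le> eta2 (lap_hat n a)"
    and sumZ: "stacked_sum n Z = 0"
    and mono: "\<And>i. i < n \<Longrightarrow> inner (X i) (G i) \<ge> \<mu> * (norm (X i))^2"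
    and lip: "\<And>i. i < n \<Longrightarrow> norm (G i) \<le> l * norm (X i)"
    and e: "e > 0" "e^2 \<le> 1 / (4 * \<alpha>)"
    and D: "\<alpha> * \<mu> - 5/4 - e * (\<alpha>^2 * l^2 + 1 + \<alpha>) > 0" and gap: "\<beta> * \<eta> - \<alpha> > 0"
  shows "lyap_deriv n \<alpha> e X L Z (\<lambda>i. - \<alpha> *\<^sub>R (G i + L i) - (X i - Z i))
      (\<lambda>i. X i - Z i - \<beta> *\<^sub>R lap_action n a L i) (\<lambda>i. (\<alpha> * \<beta>) *\<^sub>R lap_action n a L i)
    \<le> - lyap_rate \<alpha> e (\<alpha> * \<mu> - 5/4 - e * (\<alpha>^2 * l^2 + 1 + \<alpha>)) (\<beta> * \<eta> - \<alpha>) * lyap n \<alpha> e X L Z"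
  using lyap_deriv_along_flow_le[OF n \<alpha> \<beta> e(1) wb nn sc \<eta> sumZ mono lip]
    lyap_bounds(2)[of n \<alpha> Z e X L] n \<alpha> sumZ e D gap stacked_inner_self_nonneg
  by (intro lyap_alg_decay[where n = "real n"]) auto

lemma lyap_has_derivative:
  fixes X L Z :: "real \<Rightarrow> nat \<Rightarrow> 'a::real_inner"
  assumes dX: "\<And>i. i < n \<Longrightarrow> ((\<lambda>s. X s i) has_vector_derivative X' i) (at t)"
    and dL: "\<And>i. i < n \<Longrightarrow> ((\<lambda>s. L s i) has_vector_derivative L' i) (at t)"
    and dZ: "\<And>i. i < n \<Longrightarrow> ((\<lambda>s. Z s i) has_vector_derivative Z' i) (at t)"
    and "\<alpha> \<noteq> 0"
  shows "((\<lambda>s. lyap n \<alpha> e (X s) (L s) (Z s)) has_real_derivative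
           lyap_deriv n \<alpha> e (X t) (L t) (Z t) X' L' Z') (at t)"
proof -
  have dW: "((\<lambda>s. mixed \<alpha> (Z s) (L s) i) has_vector_derivative mixed \<alpha> Z' L' i) (at t)" if "i < n" for i
    unfolding mixed_def using dZ[OF that] dL[OF that] by (auto intro!: derivative_eq_intros)
  note dSX = has_vector_derivative_stacked_sum[of n X X', OF dX]
  note dSW = has_vector_derivative_stacked_sum[of n "\<lambda>s. mixed \<alpha> (Z s) (L s)", OF dW]
  show ?thesis
    unfolding lyap_def
    by (rule DERIV_cong, (rule DERIV_add DERIV_diff DERIV_cmult DERIV_cdivide
        has_real_derivative_stacked_inner has_real_derivative_inner dX dL dW dSX dSW | assumption)+)
      (use \<open>\<alpha> \<noteq> 0\<close> in \<open>simp add: lyap_deriv_def stacked_inner_commute[of n X'] stacked_inner_commute[of n L']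
        stacked_inner_commute[of n "mixed \<alpha> Z' L'"] inner_commute[of "stacked_sum n (mixed \<alpha> Z' L')"]
        field_simps\<close>)
qed

lemma continuous_on_lyap:
  fixes X L Z :: "real \<Rightarrow> nat \<Rightarrow> 'a::real_inner"
  assumes "\<And>i. i < n \<Longrightarrow> continuous_on S (\<lambda>s. X s i)"
    and "\<And>i. i < n \<Longrightarrow> continuous_on S (\<lambda>s. L s i)"
    and "\<And>i. i < n \<Longrightarrow> continuous_on S (\<lambda>s. Z s i)" and "\<alpha> \<noteq> 0"
  shows "continuous_on S (\<lambda>s. lyap n \<alpha> e (X s) (L s) (Z s))"
  unfolding lyap_def mixed_def stacked_inner_def stacked_sum_def
  using assms by (intro continuous_intros) auto

lemma exp_decay_of_deriv_le:
  fixes V V' :: "real \<Rightarrow> real"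
  assumes cont: "continuous_on {0..} V"
    and fin: "\<And>T. finite (E \<inter> {0..T})"
    and deriv: "\<And>t. t > 0 \<Longrightarrow> t \<notin> E \<Longrightarrow> (V has_real_derivative V' t) (at t)"
    and le: "\<And>t. t \<ge> 0 \<Longrightarrow> V' t \<le> - \<kappa> * V t"
    and "T \<ge> 0"
  shows "V T \<le> V 0 * exp (- \<kappa> * T)"
proof -
  define h where "h s = V s * exp (\<kappa> * s)" for s
  define h' where "h' s = (V' s + \<kappa> * V s) * exp (\<kappa> * s)" for s
  have "(h' has_integral (h T - h 0)) {0..T}"
  proof (rule fundamental_theorem_of_calculus_interior_strong[OF fin[of T] \<open>T \<ge> 0\<close>])
    show "continuous_on {0..T} h"
      unfolding h_def using continuous_on_subset[OF cont] by (intro continuous_intros) auto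
    fix t assume "t \<in> {0<..<T} - E \<inter> {0..T}"
    then have "(V has_real_derivative V' t) (at t)" by (intro deriv) auto
    then have "(h has_real_derivative h' t) (at t)"
      unfolding h_def h'_def by (auto intro!: derivative_eq_intros simp: algebra_simps)
    then show "(h has_vector_derivative h' t) (at t)"
      by (simp add: has_real_derivative_iff_has_vector_derivative)
  qed
  moreover have "h' t \<le> 0" if "t \<in> {0..T}" for t
    using le[of t] that by (simp add: h'_def mult_nonpos_nonneg)
  ultimately have "h T - h 0 \<le> 0"
    using has_integral_le[of h' "h T - h 0" "{0..T}" "\<lambda>_. 0" 0] by auto
  then have "V T * exp (\<kappa> * T) * exp (- \<kappa> * T) \<le> V 0 * exp (- \<kappa> * T)"
    by (intro mult_right_mono) (auto simp: h_def)
  then show ?thesis by (simp add: exp_minus field_simps)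
qed

lemma norm_le_sqrt_stacked_inner: "i < n \<Longrightarrow> norm (u i) \<le> sqrt (stacked_inner n u u)"
  unfolding stacked_inner_def power2_norm_eq_inner[symmetric]
  by (rule real_le_rsqrt, rule member_le_sum) auto

text \<open>Each error is recovered from the four coercive terms of \<open>lyap\<close>: \<open>L\<close> from its
  disagreement and its mean \<open>stacked_sum n W / (\<alpha> n)\<close>, and \<open>Z = W - \<alpha> L\<close>.\<close>

lemma errors_le_sqrt:
  fixes X L Z :: "nat \<Rightarrow> 'a::real_inner"
  assumes \<alpha>: "\<alpha> > 0" and n: "n > 0" and sumZ: "stacked_sum n Z = 0" and "i < n"
    and X: "stacked_inner n X X \<le> R" and W: "stacked_inner n (centred n (mixed \<alpha> Z L)) (centred n (mixed \<alpha> Z L)) \<le> R"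
    and SW: "inner (stacked_sum n (mixed \<alpha> Z L)) (stacked_sum n (mixed \<alpha> Z L)) / n \<le> R"
    and L: "stacked_inner n (centred n L) (centred n L) \<le> R"
  shows "norm (X i) + norm (L i) + norm (Z i) \<le> (5 + 1 / \<alpha> + \<alpha>) * sqrt R"
proof -
  define W where "W = mixed \<alpha> Z L"
  define mW where "mW = (1 / real n) *\<^sub>R stacked_sum n W"
  have "(norm mW)^2 = inner (stacked_sum n W) (stacked_sum n W) / n^2"
    by (simp add: mW_def power2_norm_eq_inner[symmetric] power_divide power_mult_distrib)
  also have "\<dots> \<le> inner (stacked_sum n W) (stacked_sum n W) / n"
    using n by (intro divide_left_mono) (auto simp: power2_eq_square)
  finally have mW: "norm mW \<le> sqrt R"
    using SW by (simp add: W_def real_le_rsqrt)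
  have x: "norm (X i) \<le> sqrt R"
    using norm_le_sqrt_stacked_inner[OF \<open>i < n\<close>, of X] real_sqrt_le_mono[OF X] by linarith
  have cL: "norm (centred n L i) \<le> sqrt R"
    using norm_le_sqrt_stacked_inner[OF \<open>i < n\<close>, of "centred n L"] real_sqrt_le_mono[OF L] by linarith
  have cW: "norm (centred n W i) \<le> sqrt R"
    using norm_le_sqrt_stacked_inner[OF \<open>i < n\<close>, of "centred n W"] real_sqrt_le_mono[OF W]
    unfolding W_def by linarith
  have "L i = centred n L i + (1 / \<alpha>) *\<^sub>R mW"
    using \<alpha> by (simp add: centred_def mW_def W_def stacked_sum_mixed[OF sumZ])
  then have "norm (L i) \<le> norm (centred n L i) + (1 / \<alpha>) * norm mW"
    using \<alpha> norm_triangle_ineq[of "centred n L i" "(1 / \<alpha>) *\<^sub>R mW"] by simp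
  also have "\<dots> \<le> (1 + 1 / \<alpha>) * sqrt R"
    using cL divide_right_mono[OF mW, of \<alpha>] \<alpha> by (simp add: distrib_right)
  finally have l: "norm (L i) \<le> (1 + 1 / \<alpha>) * sqrt R" .
  have "norm (W i) \<le> norm (centred n W i) + norm mW"
    by (metis centred_def diff_add_cancel mW_def norm_triangle_ineq)
  then have "norm (Z i) \<le> 2 * sqrt R + \<alpha> * norm (L i)"
    using cW mW \<alpha> norm_triangle_ineq4[of "W i" "\<alpha> *\<^sub>R L i"] by (simp add: W_def mixed_def)
  also have "\<dots> \<le> 2 * sqrt R + \<alpha> * ((1 + 1 / \<alpha>) * sqrt R)"
    using l \<alpha> by simp
  finally have "norm (Z i) \<le> 2 * sqrt R + \<alpha> * ((1 + 1 / \<alpha>) * sqrt R)" .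
  with x l have "norm (X i) + norm (L i) + norm (Z i)
      \<le> sqrt R + (1 + 1 / \<alpha>) * sqrt R + (2 * sqrt R + \<alpha> * ((1 + 1 / \<alpha>) * sqrt R))"
    by linarith
  also have "\<dots> = (5 + 1 / \<alpha> + \<alpha>) * sqrt R" using \<alpha> by (simp add: field_simps)
  finally show ?thesis .
qed

lemma sum_errors_le_lyap:
  fixes X L Z :: "nat \<Rightarrow> 'a::real_inner"
  assumes n: "n > 0" and \<alpha>: "\<alpha> > 0" and sumZ: "stacked_sum n Z = 0" and e: "e^2 \<le> 1 / (4 * \<alpha>)"
  shows "(\<Sum>i<n. norm (X i) + norm (L i) + norm (Z i))
    \<le> n * (5 + 1 / \<alpha> + \<alpha>) * sqrt (lyap n \<alpha> e X L Z / min (1 / (4 * \<alpha>)) (min (1 / 4) \<alpha>))"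
proof -
  define c where "c = min (1 / (4 * \<alpha>)) (min (1 / 4) \<alpha>)"
  have c: "c > 0" "c \<le> 1 / (4 * \<alpha>)" "c \<le> 1 / 4" "c \<le> \<alpha>"
    using \<alpha> by (simp_all add: c_def)
  have "1 / (4 * \<alpha>) \<le> 1 / \<alpha>" using \<alpha> by (simp add: divide_simps)
  then have "c \<le> 1 / \<alpha>" using c(2) by linarith
  note c = c this
  define W where "W = mixed \<alpha> Z L"
  define V where "V = lyap n \<alpha> e X L Z"
  define q where "q = inner (stacked_sum n W) (stacked_sum n W) / n"
  have q: "q \<ge> 0" "inner (stacked_sum n W) (stacked_sum n W) / (4 * \<alpha> * n) = 1 / (4 * \<alpha>) * q"
    by (simp_all add: q_def)
  have low: "stacked_inner n X X / 4 + stacked_inner n (centred n W) (centred n W) / \<alpha>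
      + 1 / (4 * \<alpha>) * q + \<alpha> * stacked_inner n (centred n L) (centred n L) \<le> V"
    using lyap_bounds(1)[OF n \<alpha> sumZ e, where X = X and L = L]
    unfolding W_def[symmetric] V_def[symmetric] q(2) .
  have "c * stacked_inner n X X \<le> stacked_inner n X X / 4"
    using mult_right_mono[OF c(3) stacked_inner_self_nonneg[of n X]] by simp
  moreover have "c * stacked_inner n (centred n W) (centred n W) \<le> stacked_inner n (centred n W) (centred n W) / \<alpha>"
    using mult_right_mono[OF c(5) stacked_inner_self_nonneg[of n "centred n W"]] by simp
  moreover have "c * q \<le> 1 / (4 * \<alpha>) * q"
    using mult_right_mono[OF c(2) q(1)] .
  moreover have "c * stacked_inner n (centred n L) (centred n L) \<le> \<alpha> * stacked_inner n (centred n L) (centred n L)"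
    using mult_right_mono[OF c(4) stacked_inner_self_nonneg[of n "centred n L"]] .
  moreover have "0 \<le> stacked_inner n X X" "0 \<le> stacked_inner n (centred n W) (centred n W) / \<alpha>"
    "0 \<le> \<alpha> * stacked_inner n (centred n L) (centred n L)" "0 \<le> 1 / (4 * \<alpha>) * q"
    using \<alpha> q(1) stacked_inner_self_nonneg[of n X] stacked_inner_self_nonneg[of n "centred n W"]
      stacked_inner_self_nonneg[of n "centred n L"] by simp_all
  ultimately have "c * stacked_inner n X X \<le> V" "c * stacked_inner n (centred n W) (centred n W) \<le> V"
    "c * q \<le> V" "c * stacked_inner n (centred n L) (centred n L) \<le> V"
    using low q(1) by linarith+
  then have "(\<Sum>i<n. norm (X i) + norm (L i) + norm (Z i)) \<le> (\<Sum>i<n. (5 + 1 / \<alpha> + \<alpha>) * sqrt (lyap n \<alpha> e X L Z / c))"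
    using c(1) by (intro sum_mono errors_le_sqrt[OF \<alpha> n sumZ]) (auto simp: W_def V_def q_def field_simps)
  then show ?thesis by (simp add: c_def)
qed

section \<open>Convergence of IDEA\<close>

lemma finite_switching_times:
  "piecewise_constant a \<Longrightarrow> finite ({t. \<not> locally_const_at a t} \<inter> {0..T})"
  unfolding piecewise_constant_def by (simp add: Int_def conj_commute)

lemma IDEA_total_z_constant:
  assumes traj: "IDEA_trajectory n gf bb \<alpha> \<beta> a x lam z"
    and pwc: "piecewise_constant a" and wb: "\<And>t. t \<ge> 0 \<Longrightarrow> weight_balanced n (a t)"
    and "T \<ge> 0"
  shows "stacked_sum n (z T) = stacked_sum n (z 0)"
proof (rule has_derivative_zero_unique_strong_interval[of "{t. \<not> locally_const_at a t} \<inter> {0..T} \<union> {0, T}"])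
  show "finite ({t. \<not> locally_const_at a t} \<inter> {0..T} \<union> {0, T})"
    using finite_switching_times[OF pwc] by simp
  show "continuous_on {0..T} (\<lambda>t. stacked_sum n (z t))"
    using traj unfolding IDEA_trajectory_def stacked_sum_def
    by (auto intro!: continuous_intros intro: continuous_on_subset)
  fix t assume t: "t \<in> {0..T} - ({t. \<not> locally_const_at a t} \<inter> {0..T} \<union> {0, T})"
  then have "((\<lambda>s. stacked_sum n (z s)) has_vector_derivative
      stacked_sum n (\<lambda>i. (\<alpha> * \<beta>) *\<^sub>R lap_action n (a t) (lam t) i)) (at t)"
    using traj unfolding IDEA_trajectory_def stacked_sum_def lap_action_def
    by (intro has_vector_derivative_sum) auto
  moreover have "stacked_sum n (\<lambda>i. (\<alpha> * \<beta>) *\<^sub>R lap_action n (a t) (lam t) i) = 0"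
    using t wb[of t] by (simp add: stacked_sum_simps stacked_sum_lap_action)
  ultimately show "((\<lambda>s. stacked_sum n (z s)) has_derivative (\<lambda>h. 0)) (at t within {0..T})"
    by (simp add: has_vector_derivative_def has_derivative_at_withinI)
qed (use \<open>T \<ge> 0\<close> in auto)

lemma IDEA_error_dynamics:
  assumes traj: "IDEA_trajectory n gf bb \<alpha> \<beta> a x lam z"
    and kkt: "\<And>i. i < n \<Longrightarrow> gf i (xo i) = - ls"
    and t: "t > 0" "locally_const_at a t" and i: "i < n"
  defines "X \<equiv> \<lambda>s i. x s i - xo i" and "L \<equiv> \<lambda>s i. lam s i - ls"
    and "Z \<equiv> \<lambda>s i. z s i - (xo i - bb i)" and "G \<equiv> \<lambda>s i. gf i (x s i) - gf i (xo i)"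
  shows "((\<lambda>s. X s i) has_vector_derivative - \<alpha> *\<^sub>R (G t i + L t i) - (X t i - Z t i)) (at t)"
    and "((\<lambda>s. L s i) has_vector_derivative X t i - Z t i - \<beta> *\<^sub>R lap_action n (a t) (L t) i) (at t)"
    and "((\<lambda>s. Z s i) has_vector_derivative (\<alpha> * \<beta>) *\<^sub>R lap_action n (a t) (L t) i) (at t)"
proof -
  have lap_L: "lap_action n (a t) (\<lambda>j. lam t j - ls) i = (\<Sum>j<n. lap n (a t) i j *\<^sub>R lam t j)"
    using lap_row_sum[OF i, of "a t"]
    by (simp add: lap_action_def scaleR_diff_right sum_subtractf flip: scaleR_sum_left)
  note ode = traj[unfolded IDEA_trajectory_def, THEN conjunct2, rule_format, OF t i]
  show "((\<lambda>s. X s i) has_vector_derivative - \<alpha> *\<^sub>R (G t i + L t i) - (X t i - Z t i)) (at t)"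
    using ode kkt[OF i] by (auto simp: X_def G_def L_def Z_def algebra_simps intro!: derivative_eq_intros)
  show "((\<lambda>s. L s i) has_vector_derivative X t i - Z t i - \<beta> *\<^sub>R lap_action n (a t) (L t) i) (at t)"
    using ode by (auto simp: X_def L_def Z_def lap_L algebra_simps intro!: derivative_eq_intros)
  show "((\<lambda>s. Z s i) has_vector_derivative (\<alpha> * \<beta>) *\<^sub>R lap_action n (a t) (L t) i) (at t)"
    using ode by (auto simp: Z_def L_def lap_L intro!: derivative_eq_intros)
qed

lemma coupling_weight_exists:
  fixes \<alpha> \<mu> l :: real
  assumes "\<alpha> > 0" and "\<alpha> * \<mu> > 5/4"
  obtains e where "e > 0" "e^2 \<le> 1 / (4 * \<alpha>)" "\<alpha> * \<mu> - 5/4 - e * (\<alpha>^2 * l^2 + 1 + \<alpha>) > 0"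
proof
  define K where "K = \<alpha>^2 * l^2 + 1 + \<alpha>"
  have "\<alpha>^2 * l^2 \<ge> 0" by simp
  then have K: "K > 0" using assms unfolding K_def by linarith
  define e where "e = min (1 / (2 * (\<alpha> + 1))) ((\<alpha> * \<mu> - 5/4) / (2 * K))"
  show e: "e > 0" using assms K by (simp add: e_def)
  have "e * K \<le> (\<alpha> * \<mu> - 5/4) / 2"
    using K by (simp add: e_def min_def field_simps split: if_splits)
  then show "\<alpha> * \<mu> - 5/4 - e * (\<alpha>^2 * l^2 + 1 + \<alpha>) > 0"
    using assms by (simp add: K_def)
  have "e^2 \<le> (1 / (2 * (\<alpha> + 1)))^2"
    using e by (intro power_mono) (auto simp: e_def)
  also have "\<dots> = 1 / (4 * (\<alpha> + 1)^2)"
    by (simp add: power_divide power2_eq_square algebra_simps)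
  also have "\<dots> \<le> 1 / (4 * \<alpha>)"
  proof (rule divide_left_mono)
    show "4 * \<alpha> \<le> 4 * (\<alpha> + 1)^2"
      using zero_le_square[of \<alpha>] assms by (simp add: power2_eq_square algebra_simps)
  qed (use assms in auto)
  finally show "e^2 \<le> 1 / (4 * \<alpha>)" .
qed

locale IDEA_setup =
  fixes n :: nat and gf :: "nat \<Rightarrow> 'a::euclidean_space \<Rightarrow> 'a" and bb :: "nat \<Rightarrow> 'a"
    and \<alpha> \<beta> \<eta> \<mu> l :: real and a :: "real \<Rightarrow> nat \<Rightarrow> nat \<Rightarrow> real"
    and x lam z :: "real \<Rightarrow> nat \<Rightarrow> 'a" and xo :: "nat \<Rightarrow> 'a" and ls :: 'a
  assumes n: "n \<ge> 2" and \<alpha>: "\<alpha> > 0" and \<eta>: "\<eta> \<ge> 0"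
    and \<alpha>\<mu>: "\<alpha> * \<mu> > 5/4" and \<beta>\<eta>: "\<beta> * \<eta> > \<alpha>"
    and mono: "\<And>i y y'. i < n \<Longrightarrow> \<mu> * (norm (y - y'))^2 \<le> inner (y - y') (gf i y - gf i y')"
    and lip: "\<And>i. i < n \<Longrightarrow> lipschitz_on l UNIV (gf i)"
    and kkt: "\<And>i. i < n \<Longrightarrow> gf i (xo i) = - ls"
    and balance: "(\<Sum>i<n. xo i) = (\<Sum>i<n. bb i)"
    and nn: "\<And>t i j. t \<ge> 0 \<Longrightarrow> i < n \<Longrightarrow> j < n \<Longrightarrow> a t i j \<ge> 0"
    and pwc: "piecewise_constant a"
    and sc: "\<And>t. t \<ge> 0 \<Longrightarrow> strongly_connected n (a t)"
    and wb: "\<And>t. t \<ge> 0 \<Longrightarrow> weight_balanced n (a t)"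
    and \<eta>_le: "\<And>t. t \<ge> 0 \<Longrightarrow> \<eta> \<le> eta2 (lap_hat n (a t))"
    and traj: "IDEA_trajectory n gf bb \<alpha> \<beta> a x lam z"
    and z0: "(\<Sum>i<n. z 0 i) = 0"
begin

abbreviation x_err where "x_err t i \<equiv> x t i - xo i"
abbreviation lam_err where "lam_err t i \<equiv> lam t i - ls"
abbreviation z_err where "z_err t i \<equiv> z t i - (xo i - bb i)"

lemma stacked_sum_z_err: "t \<ge> 0 \<Longrightarrow> stacked_sum n (z_err t) = 0"
  using IDEA_total_z_constant[OF traj pwc wb, of t] z0 balance
  by (simp add: stacked_sum_def sum_subtractf)

lemma lyap_exp_decay:
  assumes e: "e > 0" "e^2 \<le> 1 / (4 * \<alpha>)" and D: "\<alpha> * \<mu> - 5/4 - e * (\<alpha>^2 * l^2 + 1 + \<alpha>) > 0"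
    and "t \<ge> 0"
  defines "\<kappa> \<equiv> lyap_rate \<alpha> e (\<alpha> * \<mu> - 5/4 - e * (\<alpha>^2 * l^2 + 1 + \<alpha>)) (\<beta> * \<eta> - \<alpha>)"
  shows "lyap n \<alpha> e (x_err t) (lam_err t) (z_err t) \<le> lyap n \<alpha> e (x_err 0) (lam_err 0) (z_err 0) * exp (- \<kappa> * t)"
proof -
  define G where "G t i = gf i (x t i) - gf i (xo i)" for t i
  define V' where "V' t = lyap_deriv n \<alpha> e (x_err t) (lam_err t) (z_err t)
      (\<lambda>i. - \<alpha> *\<^sub>R (G t i + lam_err t i) - (x_err t i - z_err t i))
      (\<lambda>i. x_err t i - z_err t i - \<beta> *\<^sub>R lap_action n (a t) (lam_err t) i)
      (\<lambda>i. (\<alpha> * \<beta>) *\<^sub>R lap_action n (a t) (lam_err t) i)" for t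
  have \<beta>: "\<beta> \<ge> 0"
    using \<alpha> \<eta> \<beta>\<eta> by (metis less_le_not_le mult_nonpos_nonneg not_le order.strict_trans)
  show ?thesis
  proof (rule exp_decay_of_deriv_le[of _ "{t. \<not> locally_const_at a t}" V'])
    show "continuous_on {0..} (\<lambda>t. lyap n \<alpha> e (x_err t) (lam_err t) (z_err t))"
      using traj \<alpha> unfolding IDEA_trajectory_def
      by (intro continuous_on_lyap continuous_intros) auto
    show "finite ({t. \<not> locally_const_at a t} \<inter> {0..T})" for T
      by (rule finite_switching_times[OF pwc])
    show "((\<lambda>t. lyap n \<alpha> e (x_err t) (lam_err t) (z_err t)) has_real_derivative V' t) (at t)"
      if "t > 0" "t \<notin> {t. \<not> locally_const_at a t}" for t
      using that \<alpha> IDEA_error_dynamics[OF traj kkt] unfolding V'_def G_def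
      by (intro lyap_has_derivative) auto
    show "V' t \<le> - \<kappa> * lyap n \<alpha> e (x_err t) (lam_err t) (z_err t)" if "t \<ge> 0" for t
      unfolding V'_def \<kappa>_def
    proof (rule lyap_deriv_le[OF n \<alpha> \<beta> wb[OF that] _ sc[OF that] \<eta>_le[OF that] stacked_sum_z_err[OF that] _ _ e D])
      show "a t i j \<ge> 0" if "i < n" "j < n" for i j using nn \<open>t \<ge> 0\<close> that by blast
      show "\<mu> * (norm (x_err t i))^2 \<le> inner (x_err t i) (G t i)" if "i < n" for i
        using mono[OF that] by (simp add: G_def)
      show "norm (G t i) \<le> l * norm (x_err t i)" if "i < n" for i
        using lipschitz_onD[OF lip[OF that]] by (simp add: G_def dist_norm)
    qed (use \<beta>\<eta> in simp)
  qed fact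
qed

theorem exponential_convergence:
  obtains \<gamma> C where "\<gamma> > 0"
    and "\<And>t. t \<ge> 0 \<Longrightarrow> (\<Sum>i<n. norm (x t i - xo i) + norm (lam t i - ls) + norm (z t i - (xo i - bb i)))
                          \<le> C * exp (- \<gamma> * t)"
proof -
  obtain e where e: "e > 0" "e^2 \<le> 1 / (4 * \<alpha>)" and D: "\<alpha> * \<mu> - 5/4 - e * (\<alpha>^2 * l^2 + 1 + \<alpha>) > 0"
    using coupling_weight_exists[OF \<alpha> \<alpha>\<mu>] by blast
  define \<kappa> where "\<kappa> = lyap_rate \<alpha> e (\<alpha> * \<mu> - 5/4 - e * (\<alpha>^2 * l^2 + 1 + \<alpha>)) (\<beta> * \<eta> - \<alpha>)"
  define c where "c = min (1 / (4 * \<alpha>)) (min (1 / 4) \<alpha>)"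
  define K where "K = n * (5 + 1 / \<alpha> + \<alpha>)"
  define V where "V t = lyap n \<alpha> e (x_err t) (lam_err t) (z_err t)" for t
  have "\<kappa> > 0" using \<alpha> e D \<beta>\<eta> by (simp add: \<kappa>_def lyap_rate_pos)
  moreover have "(\<Sum>i<n. norm (x t i - xo i) + norm (lam t i - ls) + norm (z t i - (xo i - bb i)))
      \<le> K * sqrt (V 0 / c) * exp (- (\<kappa> / 2) * t)" if "t \<ge> 0" for t
  proof -
    have "(\<Sum>i<n. norm (x t i - xo i) + norm (lam t i - ls) + norm (z t i - (xo i - bb i))) \<le> K * sqrt (V t / c)"
      using sum_errors_le_lyap[OF _ \<alpha> stacked_sum_z_err[OF that] e(2)] n by (simp add: K_def V_def c_def)
    also have "\<dots> \<le> K * sqrt (V 0 / c * (exp (- (\<kappa> / 2) * t))^2)"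
    proof -
      have "(exp (- (\<kappa> / 2) * t))^2 = exp (- \<kappa> * t)"
        by (simp add: power2_eq_square flip: exp_add)
      then have "V t \<le> V 0 * (exp (- (\<kappa> / 2) * t))^2"
        using lyap_exp_decay[OF e D that] by (simp add: V_def \<kappa>_def)
      moreover have "c > 0" "K \<ge> 0" using \<alpha> by (simp_all add: c_def K_def)
      ultimately show ?thesis by (intro mult_left_mono real_sqrt_le_mono) (simp_all add: divide_right_mono)
    qed
    also have "\<dots> = K * sqrt (V 0 / c) * exp (- (\<kappa> / 2) * t)"
      by (simp only: real_sqrt_mult real_sqrt_abs abs_exp_cancel mult.assoc)
    finally show ?thesis .
  qed
  ultimately show thesis using that[of "\<kappa> / 2" "K * sqrt (V 0 / c)"] by simp
qed

end

lemma step_size_condition: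
  fixes \<phi> \<alpha> \<mu> l :: real
  assumes \<phi>: "\<phi> > 0" and \<mu>: "\<mu> > 0" and \<alpha>: "\<alpha> \<ge> 1 / 2"
    and bound: "\<alpha> \<ge> ((\<phi>^2 + 3 * \<phi> + 3) + l^2 + 3 / 2 - \<mu>) / ((\<phi> + 1) * \<mu>)"
  shows "\<alpha> * \<mu> > 5/4"
proof -
  have "(\<phi> + 1) * \<mu> > 0" using \<phi> \<mu> by simp
  then have "(\<phi> + 1) * (\<alpha> * \<mu>) \<ge> \<phi>^2 + 3 * \<phi> + 9/2 + l^2 - \<mu>"
    using bound by (simp add: pos_divide_le_eq algebra_simps)
  moreover have "\<mu> \<le> 2 * (\<alpha> * \<mu>)" using \<alpha> \<mu> by simp
  moreover have "0 \<le> l^2" by simp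
  moreover have "(\<phi> + 3) * (\<alpha> * \<mu>) = (\<phi> + 1) * (\<alpha> * \<mu>) + 2 * (\<alpha> * \<mu>)"
    by (simp add: algebra_simps)
  ultimately have "(\<phi> + 3) * (\<alpha> * \<mu>) \<ge> \<phi>^2 + 3 * \<phi> + 9/2" by linarith
  moreover have "\<phi>^2 + 3 * \<phi> + 9/2 - (\<phi> + 3) * (5/4) = \<phi>^2 + 7/4 * \<phi> + 3/4"
    by (simp add: field_simps)
  moreover have "0 \<le> \<phi>^2" by simp
  ultimately have "(\<phi> + 3) * (5/4) < (\<phi> + 3) * (\<alpha> * \<mu>)" using \<phi> by linarith
  moreover have "\<phi> + 3 > 0" using \<phi> by simp
  ultimately show ?thesis using mult_less_cancel_left_pos by blast
qed

lemma gain_condition: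
  fixes \<phi> \<alpha> \<beta> \<eta> :: real
  assumes \<phi>: "\<phi> > 0" and \<alpha>: "\<alpha> > 0" and gain: "2 * \<phi> * \<alpha> * \<eta> * \<beta> \<ge> 2 * (\<phi> + 1)^2 * \<alpha>^2 + 1"
  shows "\<beta> * \<eta> > \<alpha>"
proof -
  have "\<phi> \<le> (\<phi> + 1)^2" using \<phi> zero_le_power2[of \<phi>] by (simp add: power2_eq_square algebra_simps)
  then have "2 * \<phi> * \<alpha>^2 \<le> 2 * (\<phi> + 1)^2 * \<alpha>^2" by (intro mult_right_mono) auto
  then have "(2 * \<phi> * \<alpha>) * \<alpha> < (2 * \<phi> * \<alpha>) * (\<beta> * \<eta>)"
    using gain by (simp add: power2_eq_square algebra_simps)
  then show ?thesis using \<phi> \<alpha> by (simp add: mult_less_cancel_left_pos)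
qed

lemma INF_eta2_lap_hat:
  fixes a :: "real \<Rightarrow> nat \<Rightarrow> nat \<Rightarrow> real"
  assumes n: "n \<ge> 2" and nn: "\<And>t i j. t \<ge> 0 \<Longrightarrow> i < n \<Longrightarrow> j < n \<Longrightarrow> a t i j \<ge> 0"
    and sc: "\<And>t. t \<ge> 0 \<Longrightarrow> strongly_connected n (a t)"
    and wb: "\<And>t. t \<ge> 0 \<Longrightarrow> weight_balanced n (a t)"
  shows "0 \<le> (INF s \<in> a ` {0..}. eta2 (lap_hat n s))"
    and "t \<ge> 0 \<Longrightarrow> (INF s \<in> a ` {0..}. eta2 (lap_hat n s)) \<le> eta2 (lap_hat n (a t))"
proof -
  have nonneg: "0 \<le> eta2 (lap_hat n (a t))" if "t \<ge> 0" for t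
    using eta2_lap_hat(1)[OF n wb[OF that] _ sc[OF that]] nn[OF that] by blast
  moreover have "a ` {0..} \<noteq> {}" by auto
  ultimately show "0 \<le> (INF s \<in> a ` {0..}. eta2 (lap_hat n s))"
    by (intro cINF_greatest) auto
  show "(INF s \<in> a ` {0..}. eta2 (lap_hat n s)) \<le> eta2 (lap_hat n (a t))" if "t \<ge> 0"
    using nonneg that by (auto intro!: cINF_lower bdd_belowI[of _ 0])
qed

lemma uniform_moduli:
  fixes n :: nat
  assumes "n > 0"
    and sconv: "\<And>i. i < n \<Longrightarrow> \<mu>i i > 0 \<and> strongly_convex (\<mu>i i) (f i)"
    and smooth: "\<And>i. i < n \<Longrightarrow> li i > 0 \<and> lipschitz_on (li i) UNIV (gf i)"
  shows "Min (\<mu>i ` {..<n}) > 0"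
    and "\<And>i. i < n \<Longrightarrow> strongly_convex (Min (\<mu>i ` {..<n})) (f i)"
    and "\<And>i. i < n \<Longrightarrow> lipschitz_on (Max (li ` {..<n})) UNIV (gf i)"
proof -
  have fin: "finite (\<mu>i ` {..<n})" "\<mu>i ` {..<n} \<noteq> {}" "finite (li ` {..<n})" "li ` {..<n} \<noteq> {}"
    using \<open>n > 0\<close> by (auto simp: lessThan_empty_iff)
  show "Min (\<mu>i ` {..<n}) > 0"
    using Min_in[OF fin(1,2)] sconv by auto
  show "strongly_convex (Min (\<mu>i ` {..<n})) (f i)" if "i < n" for i
    using strongly_convex_mono[of "\<mu>i i" "f i"] sconv[OF that] fin that by simp
  show "lipschitz_on (Max (li ` {..<n})) UNIV (gf i)" if "i < n" for i
    using lipschitz_on_mono[of "li i" UNIV "gf i" UNIV] smooth[OF that] fin that by simp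
qed

theorem corollary2:
  fixes n :: nat
    and f :: "nat \<Rightarrow> 'a::euclidean_space \<Rightarrow> real"
    and gf :: "nat \<Rightarrow> 'a \<Rightarrow> 'a"
    and \<mu>i li :: "nat \<Rightarrow> real"
    and b :: 'a and bb :: "nat \<Rightarrow> 'a"
    and a :: "real \<Rightarrow> nat \<Rightarrow> nat \<Rightarrow> real"
    and \<phi> \<alpha> \<beta> :: real
    and x lam z :: "real \<Rightarrow> nat \<Rightarrow> 'a"
  assumes n2: "n \<ge> 2"
    and grad: "\<And>i y. i < n \<Longrightarrow> GDERIV (f i) y :> gf i y"
    and sconv: "\<And>i. i < n \<Longrightarrow> \<mu>i i > 0 \<and> strongly_convex (\<mu>i i) (f i)"
    and smooth: "\<And>i. i < n \<Longrightarrow> li i > 0 \<and> lipschitz_on (li i) UNIV (gf i)"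
    and opt_exists: "\<exists>xo. optimal n f b xo"
    and bb_sum: "(\<Sum>i<n. bb i) = b"
    and adj_nonneg: "\<And>t i j. t \<ge> 0 \<Longrightarrow> i < n \<Longrightarrow> j < n \<Longrightarrow> a t i j \<ge> 0"
    and adj_bounded: "\<exists>B. \<forall>t\<ge>0. \<forall>i<n. \<forall>j<n. a t i j \<le> B"
    and adj_pwc: "piecewise_constant a"
    and sc: "\<And>t. t \<ge> 0 \<Longrightarrow> strongly_connected n (a t)"
    and wb: "\<And>t. t \<ge> 0 \<Longrightarrow> weight_balanced n (a t)"
    and phi: "\<phi> > 0"
    and alpha1: "\<alpha> \<ge> 1 / 2"
    and alpha2: "\<alpha> \<ge> ((\<phi>\<^sup>2 + 3 * \<phi> + 3) + (Max (li ` {..<n}))\<^sup>2 + 3 / 2 - Min (\<mu>i ` {..<n}))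
                      / ((\<phi> + 1) * Min (\<mu>i ` {..<n}))"
    and beta: "2 * \<phi> * \<alpha> * (INF s \<in> a ` {0..}. eta2 (lap_hat n s)) * \<beta>
                 \<ge> 2 * (\<phi> + 1)\<^sup>2 * \<alpha>\<^sup>2 + 1"
    and traj: "IDEA_trajectory n gf bb \<alpha> \<beta> a x lam z"
    and z0: "(\<Sum>i<n. z 0 i) = 0"
  shows "\<exists>xs ls zs. \<exists>C \<gamma>. \<gamma> > 0 \<and>
           (\<forall>t\<ge>0. (\<Sum>i<n. norm (x t i - xs i) + norm (lam t i - ls i) + norm (z t i - zs i))
                      \<le> C * exp (- \<gamma> * t)) \<and>
           optimal n f b xs \<and>
           (\<forall>y. optimal n f b y \<longrightarrow> (\<forall>i<n. y i = xs i))"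
proof -
  obtain xo where opt: "optimal n f b xo" using opt_exists by blast
  define ls where "ls = - gf 0 (xo 0)"
  define \<mu> where "\<mu> = Min (\<mu>i ` {..<n})"
  define l where "l = Max (li ` {..<n})"
  define \<eta> where "\<eta> = (INF s \<in> a ` {0..}. eta2 (lap_hat n s))"
  have \<alpha>: "\<alpha> > 0" using alpha1 by simp
  have "n > 0" using n2 by simp
  note moduli = uniform_moduli[of n \<mu>i f li gf, OF this sconv smooth, folded \<mu>_def l_def]
  interpret IDEA_setup n gf bb \<alpha> \<beta> \<eta> \<mu> l a x lam z xo ls
  proof
    show "\<alpha> * \<mu> > 5/4"
      using step_size_condition[OF phi moduli(1) alpha1 alpha2[folded \<mu>_def l_def]] .
    show "\<eta> \<ge> 0" "\<And>t. t \<ge> 0 \<Longrightarrow> \<eta> \<le> eta2 (lap_hat n (a t))"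
      unfolding \<eta>_def using INF_eta2_lap_hat[OF n2 adj_nonneg sc wb] by auto
    show "\<beta> * \<eta> > \<alpha>"
      using gain_condition[OF phi \<alpha>] beta by (simp add: \<eta>_def mult.commute mult.left_commute)
    show "\<mu> * (norm (y - y'))^2 \<le> inner (y - y') (gf i y - gf i y')" if "i < n" for i y y'
      using strongly_convex_gradient_monotone[OF moduli(2) grad grad] that by simp
    show "gf i (xo i) = - ls" if "i < n" for i
      using optimal_gradients_eq[OF grad opt that] by (simp add: ls_def)
    show "(\<Sum>i<n. xo i) = (\<Sum>i<n. bb i)"
      using opt bb_sum by (simp add: optimal_def feasible_def)
  qed (use n2 \<alpha> moduli(3) adj_nonneg adj_pwc sc wb traj z0 in auto)
  obtain \<gamma> C where "\<gamma> > 0" and "\<And>t. t \<ge> 0 \<Longrightarrow>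
      (\<Sum>i<n. norm (x t i - xo i) + norm (lam t i - ls) + norm (z t i - (xo i - bb i))) \<le> C * exp (- \<gamma> * t)"
    using exponential_convergence by blast
  moreover have "\<forall>y. optimal n f b y \<longrightarrow> (\<forall>i<n. y i = xo i)"
    using optimal_unique[OF grad sconv opt] by blast
  ultimately show ?thesis using opt by fast
qed

end
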